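(* Let $G$ be a locally compact Hausdorff étale groupoid, and let $\Sigma \rightarrow G$ be a twist. Suppose there is a non-zero locally proper negative type function $\psi$ on $G$, and that $G$ has the rapid decay property with respect to the length function $L = \sqrt{\psi}$. Take any $f \in C_r^*(\Sigma; G)$ and let $U$ be the open support of $f$. Then $f$ lies in the closure of $C_c(\Sigma|_U;U)$ in the reduced norm $\|\cdot\|_r$. In particular, the conclusion holds if $G$ is second-countable, satisfies the Haagerup property (so that it admits a non-zero locally proper negative type function $\psi$), and has the rapid decay property with respect to the induced length function $L=\sqrt{\psi}$.
   Context: A twist $\Sigma\rightarrow G$ is a locally trivial central extension $\mathbb{T}\times G^{(0)}\to\Sigma\to G$, determining a line bundle over $G$. $C_c(\Sigma;G)$ is the $*$-algebra of continuous compactly supported sections (convolution, involution $f^*(\gamma)=\overline{f(\gamma^{-1})}$), and $C_r^*(\Sigma;G)$ its completion in the reduced norm $\|\cdot\|_r$ from the left regular representations. The identity on $C_c(\Sigma;G)$ extends to an injective contractive map $C_r^*(\Sigma;G)\to C_0(\Sigma;G)$, by which elements of $C_r^*(\Sigma;G)$ are regarded as sections; the open support of $f$ is $\{\gamma: f(\gamma)\ne0\}$, and $C_c(\Sigma|_U;U)$ is the set of sections in $C_c(\Sigma;G)$ supported in $U$. A locally proper negative type function is a continuous $\psi\colon G\to\mathbb{R}$ with $\psi|_{G^{(0)}}=0$, $\psi(\gamma)=\psi(\gamma^{-1})$, conditionally negative definite (for $x\in G^{(0)}$, $\gamma_1,\dots,\gamma_n\in s^{-1}(x)$, real $\lambda_i$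 with $\sum\lambda_i=0$: $\sum_{i,j}\lambda_i\lambda_j\psi(\gamma_i\gamma_j^{-1})\le0$), and such that $(\psi,r,s)\colon G\to\mathbb{R}\times G^{(0)}\times G^{(0)}$ is proper; its square root $\sqrt\psi$ is a length function ($\ge0$, vanishing on units, symmetric, subadditive). With $\|f\|_{2,p,L}=\max\{\sup_x(\sum_{\gamma\in s^{-1}(x)}|f(\gamma)|^2(1+L(\gamma))^{2p})^{1/2},\sup_x(\sum_{\gamma\in r^{-1}(x)}|f(\gamma)|^2(1+L(\gamma))^{2p})^{1/2}\}$, $G$ has the rapid decay property with respect to $L$ if there exist $c>0$ and $p\in\mathbb{Z}_+$ with $\|f\|_r\le c\|f\|_{2,p,L}$ for all $f\in C_c(\Sigma;G)$. $G$ has the Haagerup property if there is a net $(k_i)$ of positive-definite continuous functions on $G$ (for each $x$ and finite $F\subseteq s^{-1}(x)$, $[k_i(\gamma\eta^{-1})]_{\eta,\gamma\in F}$ is positive semidefinite) such that each $k_i|_{G^{(0)}}=1$, each $k_i$ restricted to $G^K_K=r^{-1}(K)\cap s^{-1}(K)$ lies in $C_0(G^K_K)$ for every compact $K\subseteq G^{(0)}$, and $k_i\to1$ uniformly on compact subsets of $G$; for second-countable $G$ the paper uses that this (in its sequential form) is equivalent to the existence of a non-zero locally proper negative type function. *)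

theory Defs
  imports "HOL-Analysis.Analysis"
begin

text \<open>An (algebraic) groupoid whose arrow set is the whole type 'a, with unit space U,
  range and source maps r, s, partial multiplication m (defined on pairs with s g = r h)
  and inverse i.\<close>
definition groupoid :: "'a set \<Rightarrow> ('a \<Rightarrow> 'a) \<Rightarrow> ('a \<Rightarrow> 'a) \<Rightarrow> ('a \<Rightarrow> 'a \<Rightarrow> 'a) \<Rightarrow> ('a \<Rightarrow> 'a) \<Rightarrow> bool" where
  "groupoid U r s m i \<longleftrightarrow>
     (\<forall>u\<in>U. r u = u \<and> s u = u) \<and> (\<forall>g. r g \<in> U \<and> s g \<in> U) \<and>
     (\<forall>g h. s g = r h \<longrightarrow> r (m g h) = r g \<and> s (m g h) = s h) \<and>
     (\<forall>g h k. s g = r h \<and> s h = r k \<longrightarrow> m (m g h) k = m g (m h k)) \<and>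
     (\<forall>g. m (r g) g = g \<and> m g (s g) = g) \<and>
     (\<forall>g. r (i g) = s g \<and> s (i g) = r g \<and> m g (i g) = r g \<and> m (i g) g = s g)"

definition topological_groupoid ::
  "'a::topological_space set \<Rightarrow> ('a \<Rightarrow> 'a) \<Rightarrow> ('a \<Rightarrow> 'a) \<Rightarrow> ('a \<Rightarrow> 'a \<Rightarrow> 'a) \<Rightarrow> ('a \<Rightarrow> 'a) \<Rightarrow> bool" where
  "topological_groupoid U r s m i \<longleftrightarrow> groupoid U r s m i \<and>
     continuous_on {(g, h). s g = r h} (\<lambda>(g, h). m g h) \<and> continuous_on UNIV i"

definition locally_compact_sp :: "'a::topological_space itself \<Rightarrow> bool" where
  "locally_compact_sp _ \<longleftrightarrow> (\<forall>x::'a. \<exists>V K. open V \<and> compact K \<and> x \<in> V \<and> V \<subseteq> K)"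

definition etale :: "('a::topological_space \<Rightarrow> 'a) \<Rightarrow> bool" where
  "etale r \<longleftrightarrow> (\<forall>g. \<exists>V. open V \<and> g \<in> V \<and> open (r ` V) \<and> (\<exists>h. homeomorphism V (r ` V) r h))"

text \<open>A twist: a locally trivial central extension  T x G0 --iota--> Sigma --p--> G.
  Sigma is the type 's with groupoid structure (S0, rS, sS, mS, iS).\<close>
definition twist ::
  "'g::topological_space set \<Rightarrow> ('g \<Rightarrow> 'g) \<Rightarrow> ('g \<Rightarrow> 'g) \<Rightarrow> ('g \<Rightarrow> 'g \<Rightarrow> 'g) \<Rightarrow> ('g \<Rightarrow> 'g) \<Rightarrow>
   's::topological_space set \<Rightarrow> ('s \<Rightarrow> 's) \<Rightarrow> ('s \<Rightarrow> 's) \<Rightarrow> ('s \<Rightarrow> 's \<Rightarrow> 's) \<Rightarrow> ('s \<Rightarrow> 's) \<Rightarrow>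
   ('s \<Rightarrow> 'g) \<Rightarrow> (complex \<Rightarrow> 'g \<Rightarrow> 's) \<Rightarrow> bool" where
  "twist G0 r s m i S0 rS sS mS iS p iota \<longleftrightarrow>
     topological_groupoid S0 rS sS mS iS \<and>
     continuous_on UNIV p \<and> surj p \<and>
     (\<forall>a b. sS a = rS b \<longrightarrow> p (mS a b) = m (p a) (p b)) \<and>
     (\<forall>a. p (iS a) = i (p a)) \<and>
     (\<exists>j. homeomorphism (sphere 0 1 \<times> G0) (p -` G0) (\<lambda>(z, x). iota z x) j) \<and>
     (\<forall>z\<in>sphere 0 1. \<forall>x\<in>G0. p (iota z x) = x) \<and>
     (\<forall>z\<in>sphere 0 1. \<forall>w\<in>sphere 0 1. \<forall>x\<in>G0.
        sS (iota z x) = rS (iota w x) \<and> mS (iota z x) (iota w x) = iota (z * w) x) \<and>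
     (\<forall>z\<in>sphere 0 1. \<forall>\<sigma>. mS (iota z (r (p \<sigma>))) \<sigma> = mS \<sigma> (iota z (s (p \<sigma>)))) \<and>
     (\<forall>\<gamma>. \<exists>V. open V \<and> \<gamma> \<in> V \<and> (\<exists>S \<phi>. continuous_on V S \<and> (\<forall>g\<in>V. p (S g) = g) \<and>
        homeomorphism (sphere 0 1 \<times> V) (p -` V) (\<lambda>(z, g). mS (iota z (r g)) (S g)) \<phi>))"

text \<open>Sections of the line bundle: functions on Sigma with f(z . sigma) = z f(sigma).\<close>
definition is_section :: "('g \<Rightarrow> 'g) \<Rightarrow> ('s \<Rightarrow> 's \<Rightarrow> 's) \<Rightarrow> ('s \<Rightarrow> 'g) \<Rightarrow> (complex \<Rightarrow> 'g \<Rightarrow> 's)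
   \<Rightarrow> ('s \<Rightarrow> complex) \<Rightarrow> bool" where
  "is_section r mS p iota f \<longleftrightarrow>
     (\<forall>\<sigma>. \<forall>z\<in>sphere 0 1. f (mS (iota z (r (p \<sigma>))) \<sigma>) = z * f \<sigma>)"

definition Cc_sec :: "('g::topological_space \<Rightarrow> 'g) \<Rightarrow> ('s::topological_space \<Rightarrow> 's \<Rightarrow> 's)
   \<Rightarrow> ('s \<Rightarrow> 'g) \<Rightarrow> (complex \<Rightarrow> 'g \<Rightarrow> 's) \<Rightarrow> ('s \<Rightarrow> complex) \<Rightarrow> bool" where
  "Cc_sec r mS p iota f \<longleftrightarrow> is_section r mS p iota f \<and> continuous_on UNIV f \<and>
     compact (closure (p ` {\<sigma>. f \<sigma> \<noteq> 0}))"

definition lift :: "('s \<Rightarrow> 'g) \<Rightarrow> 'g \<Rightarrow> 's" where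
  "lift p \<gamma> = (SOME \<sigma>. p \<sigma> = \<gamma>)"

definition l2n :: "'a set \<Rightarrow> ('a \<Rightarrow> complex) \<Rightarrow> ereal" where
  "l2n A h = (SUP F\<in>{F. finite F \<and> F \<subseteq> A}. ereal (sqrt (\<Sum>\<gamma>\<in>F. (cmod (h \<gamma>))\<^sup>2)))"

text \<open>Left regular representation at a unit x applied to a finitely supported vector xi
  on s^{-1}(x) (vectors indexed through the chosen lifts), evaluated at gamma in s^{-1}(x).\<close>
definition regrep :: "('s \<Rightarrow> 's \<Rightarrow> 's) \<Rightarrow> ('s \<Rightarrow> 's) \<Rightarrow> ('s \<Rightarrow> 'g) \<Rightarrow> ('s \<Rightarrow> complex)
   \<Rightarrow> ('g \<Rightarrow> complex) \<Rightarrow> 'g \<Rightarrow> complex" where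
  "regrep mS iS p f \<xi> \<gamma> = (\<Sum>\<eta>\<in>{\<eta>. \<xi> \<eta> \<noteq> 0}. f (mS (lift p \<gamma>) (iS (lift p \<eta>))) * \<xi> \<eta>)"

text \<open>Reduced norm: supremum over units x of the operator norms of the left regular
  representations (computed on the dense set of finitely supported unit vectors).\<close>
definition rnorm :: "'g set \<Rightarrow> ('g \<Rightarrow> 'g) \<Rightarrow> ('s \<Rightarrow> 's \<Rightarrow> 's) \<Rightarrow> ('s \<Rightarrow> 's) \<Rightarrow> ('s \<Rightarrow> 'g)
   \<Rightarrow> ('s \<Rightarrow> complex) \<Rightarrow> ereal" where
  "rnorm G0 s mS iS p f =
     (SUP (x, \<xi>)\<in>{(x, \<xi>). x \<in> G0 \<and> finite {\<eta>. \<xi> \<eta> \<noteq> 0} \<and> (\<forall>\<eta>. \<xi> \<eta> \<noteq> 0 \<longrightarrow> s \<eta> = x) \<and>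
                       (\<Sum>\<eta>\<in>{\<eta>. \<xi> \<eta> \<noteq> 0}. (cmod (\<xi> \<eta>))\<^sup>2) \<le> 1}.
        l2n {\<gamma>. s \<gamma> = x} (regrep mS iS p f \<xi>))"

text \<open>C_r^*(Sigma;G), regarded (via the injective map j) as a space of sections: the
  sections that are reduced-norm limits of elements of C_c(Sigma;G).\<close>
definition Cr_sec :: "'g::topological_space set \<Rightarrow> ('g \<Rightarrow> 'g) \<Rightarrow> ('g \<Rightarrow> 'g) \<Rightarrow>
   ('s::topological_space \<Rightarrow> 's \<Rightarrow> 's) \<Rightarrow> ('s \<Rightarrow> 's) \<Rightarrow> ('s \<Rightarrow> 'g) \<Rightarrow> (complex \<Rightarrow> 'g \<Rightarrow> 's)
   \<Rightarrow> ('s \<Rightarrow> complex) \<Rightarrow> bool" where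
  "Cr_sec G0 r s mS iS p iota f \<longleftrightarrow> is_section r mS p iota f \<and>
     (\<exists>fn. (\<forall>n. Cc_sec r mS p iota (fn n)) \<and>
        ((\<lambda>n. rnorm G0 s mS iS p (\<lambda>\<sigma>. f \<sigma> - fn n \<sigma>)) \<longlongrightarrow> 0) sequentially)"

definition locally_proper_negative_type ::
  "'g::topological_space set \<Rightarrow> ('g \<Rightarrow> 'g) \<Rightarrow> ('g \<Rightarrow> 'g) \<Rightarrow> ('g \<Rightarrow> 'g \<Rightarrow> 'g) \<Rightarrow> ('g \<Rightarrow> 'g)
   \<Rightarrow> ('g \<Rightarrow> real) \<Rightarrow> bool" where
  "locally_proper_negative_type G0 r s m i \<psi> \<longleftrightarrow>
     continuous_on UNIV \<psi> \<and> (\<forall>x\<in>G0. \<psi> x = 0) \<and> (\<forall>g. \<psi> (i g) = \<psi> g) \<and>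
     (\<forall>x\<in>G0. \<forall>n (\<gamma>::nat \<Rightarrow> 'g) (c::nat \<Rightarrow> real).
        (\<forall>k<n. s (\<gamma> k) = x) \<and> (\<Sum>k<n. c k) = 0 \<longrightarrow>
        (\<Sum>k<n. \<Sum>l<n. c k * c l * \<psi> (m (\<gamma> k) (i (\<gamma> l)))) \<le> 0) \<and>
     (\<forall>K. compact K \<and> K \<subseteq> UNIV \<times> G0 \<times> G0 \<longrightarrow> compact {g. (\<psi> g, r g, s g) \<in> K})"

definition norm_2pL :: "'g set \<Rightarrow> ('g \<Rightarrow> 'g) \<Rightarrow> ('g \<Rightarrow> 'g) \<Rightarrow> ('s \<Rightarrow> 'g) \<Rightarrow> ('g \<Rightarrow> real)
   \<Rightarrow> nat \<Rightarrow> ('s \<Rightarrow> complex) \<Rightarrow> ereal" where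
  "norm_2pL G0 r s p L k f =
     max (SUP x\<in>G0. l2n {\<gamma>. s \<gamma> = x} (\<lambda>\<gamma>. f (lift p \<gamma>) * complex_of_real ((1 + L \<gamma>) ^ k)))
         (SUP x\<in>G0. l2n {\<gamma>. r \<gamma> = x} (\<lambda>\<gamma>. f (lift p \<gamma>) * complex_of_real ((1 + L \<gamma>) ^ k)))"

definition rapid_decay ::
  "'g::topological_space set \<Rightarrow> ('g \<Rightarrow> 'g) \<Rightarrow> ('g \<Rightarrow> 'g) \<Rightarrow> ('s::topological_space \<Rightarrow> 's \<Rightarrow> 's)
   \<Rightarrow> ('s \<Rightarrow> 's) \<Rightarrow> ('s \<Rightarrow> 'g) \<Rightarrow> (complex \<Rightarrow> 'g \<Rightarrow> 's) \<Rightarrow> ('g \<Rightarrow> real) \<Rightarrow> bool" where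
  "rapid_decay G0 r s mS iS p iota L \<longleftrightarrow>
     (\<exists>c>0. \<exists>k::nat. \<forall>f. Cc_sec r mS p iota f \<longrightarrow>
        rnorm G0 s mS iS p f \<le> ereal c * norm_2pL G0 r s p L k f)"

end

theory Submission
  imports Defs
begin

text \<open>
  Write \<open>e\<^sub>t = exp (- t \<psi>)\<close>. Since \<open>\<psi>\<close> is conditionally negative definite, Schoenberg's
  argument (Schur products and exponentials of positive semidefinite kernels) shows that \<open>e\<^sub>t\<close>
  is a positive definite function equal to \<open>1\<close> on the units, so multiplication by \<open>e\<^sub>t\<close> does not
  increase the reduced norm. Approximating \<open>f\<close> by \<open>g \<in> C\<^sub>c\<close>, the section \<open>(1 - e\<^sub>t) g\<close> is \<open>O(t)\<close>
  in the weighted \<open>\<ell>\<^sup>2\<close>-norm of the rapid decay inequality, because \<open>g\<close> has compact support and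
  compact sets meet the fibres of an etale groupoid in boundedly many points; hence \<open>e\<^sub>t f\<close> is close
  to \<open>f\<close> for small \<open>t\<close>. Finally \<open>e\<^sub>t f\<close> is approximated by \<open>e\<^sub>t \<chi>(|f|) f\<close>, where \<open>\<chi>\<close> cuts off the
  values \<open>|f| \<le> \<eta>\<close>: this section has compact support inside the open support of \<open>f\<close>, and the
  remainder \<open>e\<^sub>t (1 - \<chi>(|f|)) f\<close> is small by rapid decay, since \<open>e\<^sub>t (1 + \<surd>\<psi>)\<^sup>k\<close> is bounded
  and \<open>(1 - \<chi>(|f|)) |f|\<close> is \<open>\<ell>\<^sup>2\<close>-small along the fibres.
\<close>

section \<open>Groupoids and twists\<close>

locale groupoid_laws =
  fixes U :: "'a set" and r s :: "'a \<Rightarrow> 'a" and m :: "'a \<Rightarrow> 'a \<Rightarrow> 'a" and i :: "'a \<Rightarrow> 'a"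
  assumes groupoid: "groupoid U r s m i"
begin

lemma r_unit: "u \<in> U \<Longrightarrow> r u = u" and s_unit: "u \<in> U \<Longrightarrow> s u = u"
  and r_in_units: "r g \<in> U" and s_in_units: "s g \<in> U"
  and r_mult: "s g = r h \<Longrightarrow> r (m g h) = r g" and s_mult: "s g = r h \<Longrightarrow> s (m g h) = s h"
  and mult_assoc: "s g = r h \<Longrightarrow> s h = r k \<Longrightarrow> m (m g h) k = m g (m h k)"
  and mult_r_left: "m (r g) g = g" and mult_s_right: "m g (s g) = g"
  and r_inv: "r (i g) = s g" and s_inv: "s (i g) = r g"
  and mult_inv_right: "m g (i g) = r g" and mult_inv_left: "m (i g) g = s g"
  using groupoid unfolding groupoid_def by blast+

lemma inv_unit: "x \<in> U \<Longrightarrow> i x = x"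
  by (metis mult_r_left r_inv s_unit mult_inv_right r_unit)

lemma inv_unique:
  assumes "s a = r b" "m a b = r a"
  shows "b = i a"
proof -
  have "b = m (r b) b" by (simp add: mult_r_left)
  also have "\<dots> = m (m (i a) a) b" using assms by (simp add: mult_inv_left)
  also have "\<dots> = m (i a) (m a b)" using assms by (simp add: mult_assoc s_inv)
  also have "\<dots> = m (i a) (s (i a))" using assms by (simp add: s_inv)
  also have "\<dots> = i a" by (simp add: mult_s_right)
  finally show ?thesis .
qed

lemma inv_inv [simp]: "i (i g) = g"
proof -
  have "g = i (i g)"
    by (rule inv_unique) (auto simp: s_inv mult_inv_left r_inv)
  then show ?thesis by simp
qed

lemma mult_inv_unit_right: "s g = x \<Longrightarrow> m g (i x) = g"
  by (metis inv_unit mult_s_right s_in_units)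

lemma unit_mult_inv: "s g = x \<Longrightarrow> m x (i g) = i g"
  by (metis mult_r_left r_inv)

lemma inv_mult_inv:
  assumes "s a = s b"
  shows "i (m a (i b)) = m b (i a)"
proof -
  let ?u = "m a (i b)" and ?v = "m b (i a)"
  have ab: "s a = r (i b)" and ba: "s b = r (i a)" using assms by (simp_all add: r_inv)
  have "m ?u ?v = m a (m (i b) (m b (i a)))"
    using ab ba by (intro mult_assoc) (auto simp: s_inv r_mult)
  also have "m (i b) (m b (i a)) = m (m (i b) b) (i a)"
    using ba by (simp add: mult_assoc s_inv)
  also have "\<dots> = i a" using ba by (simp add: mult_inv_left mult_r_left)
  finally have "m ?u ?v = r ?u" using ab by (simp add: mult_inv_right r_mult)
  then have "?v = i ?u" using ab ba by (intro inv_unique) (auto simp: s_mult s_inv r_mult)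
  then show ?thesis by simp
qed

end

locale twisted_groupoid = G: groupoid_laws G0 r s m i + S: groupoid_laws S0 rS sS mS iS
  for G0 :: "'g::t2_space set" and r s i :: "'g \<Rightarrow> 'g" and m :: "'g \<Rightarrow> 'g \<Rightarrow> 'g"
    and S0 :: "'s::topological_space set" and rS sS iS :: "'s \<Rightarrow> 's" and mS :: "'s \<Rightarrow> 's \<Rightarrow> 's" +
  fixes p :: "'s \<Rightarrow> 'g" and iota :: "complex \<Rightarrow> 'g \<Rightarrow> 's"
  assumes topological: "topological_groupoid G0 r s m i"
    and etale: "etale r"
    and twist: "twist G0 r s m i S0 rS sS mS iS p iota"
begin

lemma p_continuous: "continuous_on UNIV p" and p_surj: "surj p"
  and p_mult: "sS a = rS b \<Longrightarrow> p (mS a b) = m (p a) (p b)"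
  and p_inv: "p (iS a) = i (p a)"
  and iota_homeomorphism: "\<exists>j. homeomorphism (sphere 0 1 \<times> G0) (p -` G0) (\<lambda>(z, x). iota z x) j"
  and p_iota: "z \<in> sphere 0 1 \<Longrightarrow> x \<in> G0 \<Longrightarrow> p (iota z x) = x"
  and iota_mult: "z \<in> sphere 0 1 \<Longrightarrow> w \<in> sphere 0 1 \<Longrightarrow> x \<in> G0 \<Longrightarrow>
        sS (iota z x) = rS (iota w x) \<and> mS (iota z x) (iota w x) = iota (z * w) x"
  and local_trivialization: "\<exists>V. open V \<and> \<gamma> \<in> V \<and> (\<exists>S \<phi>. continuous_on V S \<and> (\<forall>g\<in>V. p (S g) = g) \<and>
        homeomorphism (sphere 0 1 \<times> V) (p -` V) (\<lambda>(z, g). mS (iota z (r g)) (S g)) \<phi>)"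
  using twist unfolding twist_def by blast+

lemma inv_continuous: "continuous_on UNIV i"
  using topological unfolding topological_groupoid_def by blast

lemma p_lift [simp]: "p (lift p \<gamma>) = \<gamma>"
  unfolding lift_def by (metis (mono_tags, lifting) p_surj someI surj_def)

lemma iota_image: "(\<lambda>(z, x). iota z x) ` (sphere 0 1 \<times> G0) = p -` G0"
  using iota_homeomorphism unfolding homeomorphism_def by blast

lemma iota_inj:
  assumes "z \<in> sphere 0 1" "w \<in> sphere 0 1" "x \<in> G0" "y \<in> G0" "iota z x = iota w y"
  shows "z = w \<and> x = y"
proof -
  obtain j where "homeomorphism (sphere 0 1 \<times> G0) (p -` G0) (\<lambda>(z, x). iota z x) j"
    using iota_homeomorphism by blast
  then have "\<forall>a\<in>sphere 0 1 \<times> G0. j ((\<lambda>(z, x). iota z x) a) = a"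
    unfolding homeomorphism_def by blast
  then have "j (iota z x) = (z, x)" "j (iota w y) = (w, y)" using assms(1-4) by auto
  then show ?thesis using assms(5) by (metis prod.inject)
qed

lemma p_rS: "p (rS a) = r (p a)"
proof -
  have "p (rS a) = p (mS a (iS a))" by (simp add: S.mult_inv_right)
  also have "\<dots> = m (p a) (i (p a))" by (simp add: p_mult S.r_inv p_inv)
  finally show ?thesis by (simp add: G.mult_inv_right)
qed

lemma p_sS: "p (sS a) = s (p a)"
proof -
  have "p (sS a) = p (mS (iS a) a)" by (simp add: S.mult_inv_left)
  also have "\<dots> = m (i (p a)) (p a)" by (simp add: p_mult S.s_inv p_inv)
  finally show ?thesis by (simp add: G.mult_inv_left)
qed

text \<open>A unit is idempotent, and the only idempotent on the circle is \<open>1\<close>.\<close>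
lemma unit_eq_iota_one:
  assumes "u \<in> S0"
  shows "u = iota 1 (p u)"
proof -
  have "p u = r (p u)" using p_rS[of u] S.r_unit[OF assms] by simp
  then have "p u \<in> G0" by (metis G.r_in_units)
  then have "u \<in> (\<lambda>(z, x). iota z x) ` (sphere 0 1 \<times> G0)" using iota_image by auto
  then obtain z y where zy: "z \<in> sphere 0 1" "y \<in> G0" "u = iota z y" by auto
  have y: "y = p u" using zy p_iota by simp
  have "mS u u = u" using S.mult_s_right[of u] S.s_unit[OF assms] by simp
  then have "iota (z * z) y = iota z y" using iota_mult[OF zy(1) zy(1) zy(2)] zy(3) by simp
  moreover have "z * z \<in> sphere 0 1" using zy(1) by (simp add: norm_mult)
  ultimately have "z * z = z" using iota_inj zy by blast
  moreover have "z \<noteq> 0" using zy(1) by auto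
  ultimately have "z * (z - 1) = 0" by (simp add: algebra_simps)
  then have "z = 1" using \<open>z \<noteq> 0\<close> by simp
  then show ?thesis using zy(3) y by simp
qed

lemma sS_eq: "sS a = iota 1 (s (p a))"
  using unit_eq_iota_one[OF S.s_in_units[of a]] by (simp add: p_sS)

lemma rS_eq: "rS a = iota 1 (r (p a))"
  using unit_eq_iota_one[OF S.r_in_units[of a]] by (simp add: p_rS)

lemma p_circle_action [simp]: "z \<in> sphere 0 1 \<Longrightarrow> p (mS (iota z (r (p a))) a) = p a"
  by (simp add: p_mult sS_eq rS_eq G.r_in_units p_iota G.s_unit G.mult_r_left)

lemma fiber_eq_circle_orbit:
  assumes "p b = p a"
  shows "\<exists>z\<in>sphere 0 1. b = mS (iota z (r (p a))) a"
proof -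
  let ?t = "mS b (iS a)"
  have c: "sS b = rS (iS a)" using assms by (simp add: S.r_inv sS_eq)
  have pt: "p ?t = r (p a)" using c assms by (simp add: p_mult p_inv G.mult_inv_right)
  then have "?t \<in> (\<lambda>(z, x). iota z x) ` (sphere 0 1 \<times> G0)"
    using iota_image G.r_in_units by simp
  then obtain z y where zy: "z \<in> sphere 0 1" "y \<in> G0" "?t = iota z y" by auto
  have "mS ?t a = mS b (mS (iS a) a)" using c by (intro S.mult_assoc) (auto simp: S.s_inv)
  also have "\<dots> = mS b (sS b)" using assms by (simp add: S.mult_inv_left sS_eq)
  also have "\<dots> = b" by (simp add: S.mult_s_right)
  finally show ?thesis using zy pt p_iota by auto
qed

lemma section_norm_eq:
  assumes "is_section r mS p iota h" "p b = p a"
  shows "cmod (h b) = cmod (h a)"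
proof -
  obtain z where "z \<in> sphere 0 1" "b = mS (iota z (r (p a))) a"
    using fiber_eq_circle_orbit[OF assms(2)] by blast
  with assms(1) show ?thesis unfolding is_section_def by (simp add: norm_mult)
qed

lemma section_norm_lift: "is_section r mS p iota h \<Longrightarrow> cmod (h (lift p (p a))) = cmod (h a)"
  using section_norm_eq[of h "lift p (p a)" a] by simp

lemma p_regrep_entry: "s \<gamma> = s \<eta> \<Longrightarrow> p (mS (lift p \<gamma>) (iS (lift p \<eta>))) = m \<gamma> (i \<eta>)"
  by (simp add: p_mult p_inv S.r_inv sS_eq)

end

section \<open>Positive semidefinite kernels\<close>

definition psd_kernel :: "'a set \<Rightarrow> ('a \<Rightarrow> 'a \<Rightarrow> real) \<Rightarrow> bool" where
  "psd_kernel P K \<longleftrightarrow> (\<forall>c. 0 \<le> (\<Sum>k\<in>P. \<Sum>l\<in>P. c k * c l * K k l))"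

definition symmetric_kernel :: "'a set \<Rightarrow> ('a \<Rightarrow> 'a \<Rightarrow> real) \<Rightarrow> bool" where
  "symmetric_kernel P K \<longleftrightarrow> (\<forall>k\<in>P. \<forall>l\<in>P. K k l = K l k)"

lemma psd_kernelD: "psd_kernel P K \<Longrightarrow> 0 \<le> (\<Sum>k\<in>P. \<Sum>l\<in>P. c k * c l * K k l)"
  unfolding psd_kernel_def by blast

lemma psd_kernel_diag_nonneg:
  assumes "psd_kernel P K" "finite P" "a \<in> P"
  shows "0 \<le> K a a"
proof -
  let ?c = "\<lambda>k. if k = a then 1 else 0"
  have "0 \<le> (\<Sum>k\<in>P. \<Sum>l\<in>P. ?c k * ?c l * K k l)" by (rule psd_kernelD[OF assms(1)])
  also have "\<dots> = (\<Sum>k\<in>P. ?c k * (\<Sum>l\<in>P. ?c l * K k l))"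
    by (simp add: sum_distrib_left mult.assoc)
  also have "\<dots> = K a a" using assms(2,3) by (simp add: mult_if_delta)
  finally show ?thesis .
qed

text \<open>Otherwise the form at \<open>t \<delta>\<^sub>a + \<delta>\<^sub>b\<close> is affine in \<open>t\<close> and takes negative values.\<close>
lemma psd_kernel_diag_zero:
  assumes "psd_kernel P K" "symmetric_kernel P K" "finite P" "a \<in> P" "b \<in> P" "K a a = 0"
  shows "K a b = 0"
proof (rule ccontr)
  assume nz: "K a b \<noteq> 0"
  then have "a \<noteq> b" using assms(6) by auto
  define t where "t = - (K b b + 1) / (2 * K a b)"
  define c where "c x = t * (if x = a then 1 else 0) + (if x = b then 1 else 0)" for x
  have lin: "(\<Sum>l\<in>P. c l * X l) = t * X a + X b" for X :: "'a \<Rightarrow> real"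
  proof -
    have "(\<Sum>l\<in>P. c l * X l) = (\<Sum>l\<in>P. t * (if l = a then X l else 0) + (if l = b then X l else 0))"
      by (rule sum.cong) (auto simp: c_def algebra_simps)
    also have "\<dots> = t * X a + X b"
      using assms(3-5) by (simp add: sum.distrib sum_distrib_left[symmetric])
    finally show ?thesis .
  qed
  have "0 \<le> (\<Sum>k\<in>P. \<Sum>l\<in>P. c k * c l * K k l)" by (rule psd_kernelD[OF assms(1)])
  also have "\<dots> = (\<Sum>k\<in>P. c k * (\<Sum>l\<in>P. c l * K k l))"
    by (simp add: sum_distrib_left mult.assoc)
  also have "\<dots> = t * (t * K a a + K a b) + (t * K b a + K b b)" by (simp add: lin)
  also have "\<dots> = -1"
    using nz assms(2,4,5,6) unfolding symmetric_kernel_def by (simp add: t_def field_simps)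
  finally show False by simp
qed

text \<open>Minimise the form over the coefficient of \<open>a\<close>, which is attained at \<open>-S / K a a\<close>.\<close>
lemma psd_kernel_schur_complement:
  assumes psd: "psd_kernel (insert a P) K" and sym: "symmetric_kernel (insert a P) K"
    and "finite P" "a \<notin> P"
  shows "psd_kernel P (\<lambda>k l. K k l - K k a * K l a / K a a)"
  unfolding psd_kernel_def
proof
  fix c :: "'a \<Rightarrow> real"
  define S where "S = (\<Sum>k\<in>P. c k * K k a)"
  define Q where "Q = (\<Sum>k\<in>P. \<Sum>l\<in>P. c k * c l * K k l)"
  define c' where "c' = c(a := - S / K a a)"
  have c'P: "\<And>k. k \<in> P \<Longrightarrow> c' k = c k" using \<open>a \<notin> P\<close> by (auto simp: c'_def)
  have Ka: "\<And>k. k \<in> P \<Longrightarrow> K a k = K k a" using sym unfolding symmetric_kernel_def by blast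
  have "0 \<le> (\<Sum>k\<in>insert a P. \<Sum>l\<in>insert a P. c' k * c' l * K k l)"
    by (rule psd_kernelD[OF psd])
  also have "\<dots> = c' a * c' a * K a a + (\<Sum>l\<in>P. c' a * c' l * K a l) + (\<Sum>k\<in>P. c' k * c' a * K k a) +
      (\<Sum>k\<in>P. \<Sum>l\<in>P. c' k * c' l * K k l)"
    using assms(3,4) by (simp add: sum.distrib add_ac)
  also have "(\<Sum>l\<in>P. c' a * c' l * K a l) = c' a * S"
    unfolding S_def sum_distrib_left using Ka c'P by (intro sum.cong) auto
  also have "(\<Sum>k\<in>P. c' k * c' a * K k a) = c' a * S"
    unfolding S_def sum_distrib_left using c'P by (intro sum.cong) auto
  also have "(\<Sum>k\<in>P. \<Sum>l\<in>P. c' k * c' l * K k l) = Q"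
    unfolding Q_def using c'P by (intro sum.cong) auto
  finally have A: "0 \<le> c' a * c' a * K a a + c' a * S + c' a * S + Q" .
  have "(\<Sum>k\<in>P. \<Sum>l\<in>P. c k * c l * (K k l - K k a * K l a / K a a)) =
      (\<Sum>k\<in>P. \<Sum>l\<in>P. c k * c l * K k l - (c k * K k a) * (c l * K l a) / K a a)"
    by (simp add: algebra_simps)
  also have "\<dots> = Q - (\<Sum>k\<in>P. \<Sum>l\<in>P. (c k * K k a) * (c l * K l a) / K a a)"
    unfolding Q_def by (simp add: sum_subtractf)
  also have "(\<Sum>k\<in>P. \<Sum>l\<in>P. (c k * K k a) * (c l * K l a) / K a a) = S * S / K a a"
    unfolding S_def by (simp add: sum_divide_distrib[symmetric] sum_product)
  finally have B: "(\<Sum>k\<in>P. \<Sum>l\<in>P. c k * c l * (K k l - K k a * K l a / K a a)) = Q - S * S / K a a" .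
  show "0 \<le> (\<Sum>k\<in>P. \<Sum>l\<in>P. c k * c l * (K k l - K k a * K l a / K a a))"
  proof (cases "K a a = 0")
    case True
    then show ?thesis using A B by (simp add: c'_def)
  next
    case False
    then have "c' a * c' a * K a a + c' a * S + c' a * S = - S * S / K a a"
      by (simp add: c'_def field_simps)
    then show ?thesis using A B by simp
  qed
qed

text \<open>Cholesky-type factorisation \<open>K = V V\<^sup>T\<close>, one Schur complement at a time; if \<open>K a a = 0\<close> the
  whole row of \<open>a\<close> vanishes, and division by zero yields the zero column.\<close>
lemma psd_kernel_gram:
  assumes "finite P" "psd_kernel P K" "symmetric_kernel P K"
  shows "\<exists>(n::nat) V. \<forall>k\<in>P. \<forall>l\<in>P. K k l = (\<Sum>j<n. V k j * V l j)"
  using assms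
proof (induction P arbitrary: K rule: finite_induct)
  case empty
  then show ?case by auto
next
  case (insert a P)
  define K' where "K' k l = K k l - K k a * K l a / K a a" for k l
  have Kaa: "0 \<le> K a a" using psd_kernel_diag_nonneg[OF insert.prems(1)] insert.hyps by auto
  have sym: "K k l = K l k" if "k \<in> insert a P" "l \<in> insert a P" for k l
    using insert.prems(2) that unfolding symmetric_kernel_def by blast
  have "psd_kernel P K'"
    unfolding K'_def using psd_kernel_schur_complement[OF insert.prems(1,2) insert.hyps] .
  moreover have "symmetric_kernel P K'" unfolding symmetric_kernel_def K'_def using sym by auto
  ultimately obtain n :: nat and V where V: "\<forall>k\<in>P. \<forall>l\<in>P. K' k l = (\<Sum>j<n. V k j * V l j)"
    using insert.IH insert.hyps by blast
  have off: "K k a = 0" if "k \<in> P" "K a a = 0" for k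
    using psd_kernel_diag_zero[OF insert.prems(1,2)] sym that insert.hyps by auto
  define W where "W k j = (if j < n then (if k = a then 0 else V k j)
      else (if k = a then sqrt (K a a) else K k a / sqrt (K a a)))" for k j
  have "K k l = (\<Sum>j<Suc n. W k j * W l j)" if k: "k \<in> insert a P" and l: "l \<in> insert a P" for k l
  proof -
    have low: "(\<Sum>j<n. W k j * W l j) = (if k = a \<or> l = a then 0 else K' k l)"
      using V k l by (auto simp: W_def)
    have sq: "sqrt (K a a) * sqrt (K a a) = K a a" using Kaa by simp
    have col: "sqrt (K a a) * (K k a / sqrt (K a a)) = K k a" if "k \<in> P" for k
      using off[OF that] by (cases "K a a = 0") auto
    have "K k l = (if k = a \<or> l = a then 0 else K' k l) + W k n * W l n"
    proof (cases "k = a"; cases "l = a")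
      assume "k = a" "l \<noteq> a"
      then show ?thesis using col[of l] sym[of a l] l by (simp add: W_def)
    next
      assume "k \<noteq> a" "l = a"
      then show ?thesis using col[of k] k by (simp add: W_def mult.commute)
    next
      assume "k \<noteq> a" "l \<noteq> a"
      then show ?thesis using sq by (simp add: W_def K'_def)
    qed (use Kaa in \<open>simp add: W_def\<close>)
    then show ?thesis by (simp add: low)
  qed
  then show ?case by blast
qed

lemma psd_kernel_schur_product:
  assumes "finite P" "psd_kernel P A" "symmetric_kernel P A" "psd_kernel P B"
  shows "psd_kernel P (\<lambda>k l. A k l * B k l)"
  unfolding psd_kernel_def
proof
  fix c :: "'a \<Rightarrow> real"
  obtain n :: nat and V where V: "\<forall>k\<in>P. \<forall>l\<in>P. A k l = (\<Sum>j<n. V k j * V l j)"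
    using psd_kernel_gram[OF assms(1-3)] by blast
  have "(\<Sum>k\<in>P. \<Sum>l\<in>P. c k * c l * (A k l * B k l)) =
        (\<Sum>k\<in>P. \<Sum>l\<in>P. \<Sum>j<n. (c k * V k j) * (c l * V l j) * B k l)"
    using V by (intro sum.cong refl) (simp add: sum_distrib_left sum_distrib_right algebra_simps)
  also have "\<dots> = (\<Sum>j<n. \<Sum>k\<in>P. \<Sum>l\<in>P. (c k * V k j) * (c l * V l j) * B k l)"
    by (simp add: sum.swap[where B = "{..<n}"])
  also have "0 \<le> \<dots>"
    by (rule sum_nonneg) (rule psd_kernelD[OF assms(4)])
  finally show "0 \<le> (\<Sum>k\<in>P. \<Sum>l\<in>P. c k * c l * (A k l * B k l))" .
qed

lemma psd_kernel_power:
  assumes "finite P" "psd_kernel P B" "symmetric_kernel P B"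
  shows "psd_kernel P (\<lambda>k l. B k l ^ n)"
proof (induction n)
  case 0
  show ?case unfolding psd_kernel_def by (simp add: sum_product[symmetric])
next
  case (Suc n)
  have "symmetric_kernel P (\<lambda>k l. B k l ^ n)" using assms(3) unfolding symmetric_kernel_def by auto
  from psd_kernel_schur_product[OF assms(1) Suc this assms(2)] show ?case by (simp add: mult.commute)
qed

lemma psd_kernel_exp:
  assumes "finite P" "psd_kernel P B" "symmetric_kernel P B"
  shows "psd_kernel P (\<lambda>k l. exp (B k l))"
  unfolding psd_kernel_def
proof
  fix c :: "'a \<Rightarrow> real"
  have series: "(\<lambda>n. \<Sum>k\<in>P. \<Sum>l\<in>P. c k * c l * (B k l ^ n /\<^sub>R fact n)) sums
        (\<Sum>k\<in>P. \<Sum>l\<in>P. c k * c l * exp (B k l))"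
    by (intro sums_sum sums_mult exp_converges)
  have terms: "0 \<le> (\<Sum>k\<in>P. \<Sum>l\<in>P. c k * c l * (B k l ^ n /\<^sub>R fact n))" for n
  proof -
    have "(\<Sum>k\<in>P. \<Sum>l\<in>P. c k * c l * (B k l ^ n /\<^sub>R fact n)) =
          (\<Sum>k\<in>P. \<Sum>l\<in>P. c k * c l * B k l ^ n) / fact n"
      by (simp add: sum_divide_distrib sum_distrib_left divide_inverse algebra_simps)
    also have "0 \<le> \<dots>" using psd_kernelD[OF psd_kernel_power[OF assms, of n]] by simp
    finally show ?thesis .
  qed
  show "0 \<le> (\<Sum>k\<in>P. \<Sum>l\<in>P. c k * c l * exp (B k l))"
    by (rule sums_le[OF _ sums_zero series]) (use terms in blast)
qed

lemma psd_kernel_scale: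
  assumes "psd_kernel P B" "0 \<le> t"
  shows "psd_kernel P (\<lambda>k l. t * B k l)"
  unfolding psd_kernel_def
proof
  fix c :: "'a \<Rightarrow> real"
  have "(\<Sum>k\<in>P. \<Sum>l\<in>P. c k * c l * (t * B k l)) = t * (\<Sum>k\<in>P. \<Sum>l\<in>P. c k * c l * B k l)"
    by (simp add: sum_distrib_left algebra_simps)
  then show "0 \<le> (\<Sum>k\<in>P. \<Sum>l\<in>P. c k * c l * (t * B k l))"
    using psd_kernelD[OF assms(1)] assms(2) by simp
qed

lemma psd_kernel_conj_diagonal:
  assumes "psd_kernel P B"
  shows "psd_kernel P (\<lambda>k l. d k * d l * B k l)"
  unfolding psd_kernel_def
proof
  fix c :: "'a \<Rightarrow> real"
  show "0 \<le> (\<Sum>k\<in>P. \<Sum>l\<in>P. c k * c l * (d k * d l * B k l))"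
    using psd_kernelD[OF assms, of "\<lambda>k. c k * d k"] by (simp add: mult_ac)
qed

section \<open>Negative type functions\<close>

lemma sum_delta_mult:
  "finite P \<Longrightarrow> a \<in> P \<Longrightarrow> (\<Sum>l\<in>P. (if l = a then 1 else 0) * X l) = (X a :: real)"
  by (simp add: mult_if_delta)

lemma quadratic_form_shift_delta:
  fixes M :: "'a \<Rightarrow> 'a \<Rightarrow> real"
  assumes "finite Q" "x \<in> Q"
  shows "(\<Sum>k\<in>Q. \<Sum>l\<in>Q. (e k - S * (if k = x then 1 else 0)) * (e l - S * (if l = x then 1 else 0)) * M k l)
    = (\<Sum>k\<in>Q. \<Sum>l\<in>Q. e k * e l * M k l) - S * (\<Sum>l\<in>Q. e l * M x l) - S * (\<Sum>k\<in>Q. e k * M k x)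
      + S * S * M x x"
proof -
  have "(\<Sum>k\<in>Q. \<Sum>l\<in>Q. (e k - S * (if k = x then 1 else 0)) * (e l - S * (if l = x then 1 else 0)) * M k l)
     = (\<Sum>k\<in>Q. (\<Sum>l\<in>Q. e k * e l * M k l) - S * e k * M k x
          - S * (if k = x then 1 else 0) * (\<Sum>l\<in>Q. e l * M k l) + S * S * (if k = x then 1 else 0) * M k x)"
  proof (rule sum.cong[OF refl])
    fix k assume "k \<in> Q"
    have "(\<Sum>l\<in>Q. (e k - S * (if k = x then 1 else 0)) * (e l - S * (if l = x then 1 else 0)) * M k l)
      = (\<Sum>l\<in>Q. e k * e l * M k l - S * (if k = x then 1 else 0) * (e l * M k l)
          - S * e k * ((if l = x then 1 else 0) * M k l) + S * S * (if k = x then 1 else 0) * ((if l = x then 1 else 0) * M k l))"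
      by (rule sum.cong[OF refl]) (simp add: algebra_simps)
    also have "\<dots> = (\<Sum>l\<in>Q. e k * e l * M k l) - S * (if k = x then 1 else 0) * (\<Sum>l\<in>Q. e l * M k l)
          - S * e k * M k x + S * S * (if k = x then 1 else 0) * M k x"
      using assms by (simp add: sum.distrib sum_subtractf sum_distrib_left[symmetric] sum_delta_mult)
    finally show "(\<Sum>l\<in>Q. (e k - S * (if k = x then 1 else 0)) * (e l - S * (if l = x then 1 else 0)) * M k l)
     = (\<Sum>l\<in>Q. e k * e l * M k l) - S * e k * M k x
          - S * (if k = x then 1 else 0) * (\<Sum>l\<in>Q. e l * M k l) + S * S * (if k = x then 1 else 0) * M k x"
      by simp
  qed
  also have "\<dots> = (\<Sum>k\<in>Q. \<Sum>l\<in>Q. e k * e l * M k l) - S * (\<Sum>k\<in>Q. e k * M k x)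
       - S * (\<Sum>k\<in>Q. (if k = x then 1 else 0) * (\<Sum>l\<in>Q. e l * M k l)) + S * S * (\<Sum>k\<in>Q. (if k = x then 1 else 0) * M k x)"
    by (simp add: sum.distrib sum_subtractf sum_distrib_left mult.assoc)
  also have "\<dots> = (\<Sum>k\<in>Q. \<Sum>l\<in>Q. e k * e l * M k l) - S * (\<Sum>k\<in>Q. e k * M k x)
       - S * (\<Sum>l\<in>Q. e l * M x l) + S * S * M x x"
    using assms by (simp only: sum_delta_mult)
  finally show ?thesis by simp
qed

lemma sum_if_mem_mult:
  fixes F :: "'a \<Rightarrow> real"
  assumes "finite Q" "P \<subseteq> Q"
  shows "(\<Sum>l\<in>Q. (if l \<in> P then c l else 0) * F l) = (\<Sum>l\<in>P. c l * F l)"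
proof -
  have "(\<Sum>l\<in>Q. (if l \<in> P then c l else 0) * F l) = (\<Sum>l\<in>Q. (if l \<in> P then c l * F l else 0))"
    by (rule sum.cong) auto
  also have "\<dots> = (\<Sum>l\<in>Q \<inter> P. c l * F l)" using assms(1) by (simp add: sum.inter_restrict)
  also have "Q \<inter> P = P" using assms(2) by auto
  finally show ?thesis .
qed

definition (in groupoid_laws) positive_definite :: "('a \<Rightarrow> real) \<Rightarrow> bool" where
  "positive_definite \<phi> \<longleftrightarrow>
     (\<forall>x\<in>U. \<forall>P. finite P \<and> P \<subseteq> {\<gamma>. s \<gamma> = x} \<longrightarrow> psd_kernel P (\<lambda>k l. \<phi> (m k (i l))))"

locale negative_type = groupoid_laws U r s m i for U :: "'a::topological_space set" and r s m i +
  fixes \<psi> :: "'a \<Rightarrow> real"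
  assumes negative_type: "locally_proper_negative_type U r s m i \<psi>"
begin

lemma psi_continuous: "continuous_on UNIV \<psi>"
  using negative_type unfolding locally_proper_negative_type_def by (rule conjunct1)

lemma psi_unit: "x \<in> U \<Longrightarrow> \<psi> x = 0"
proof -
  have "\<forall>x\<in>U. \<psi> x = 0"
    using negative_type unfolding locally_proper_negative_type_def by (elim conjE)
  then show "x \<in> U \<Longrightarrow> \<psi> x = 0" by blast
qed

lemma psi_inv: "\<psi> (i g) = \<psi> g"
proof -
  have "\<forall>g. \<psi> (i g) = \<psi> g"
    using negative_type unfolding locally_proper_negative_type_def by (elim conjE)
  then show ?thesis by blast
qed

lemma conditionally_negative:
  fixes n :: nat and c :: "nat \<Rightarrow> real"
  assumes "x \<in> U" "\<forall>k<n. s (\<gamma> k) = x" "(\<Sum>k<n. c k) = 0"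
  shows "(\<Sum>k<n. \<Sum>l<n. c k * c l * \<psi> (m (\<gamma> k) (i (\<gamma> l)))) \<le> 0"
proof -
  have cnd: "\<forall>x\<in>U. \<forall>n (\<gamma>::nat \<Rightarrow> 'a) (c::nat \<Rightarrow> real). (\<forall>k<n. s (\<gamma> k) = x) \<and> (\<Sum>k<n. c k) = 0 \<longrightarrow>
        (\<Sum>k<n. \<Sum>l<n. c k * c l * \<psi> (m (\<gamma> k) (i (\<gamma> l)))) \<le> 0"
    using negative_type unfolding locally_proper_negative_type_def by (elim conjE)
  show ?thesis using cnd[rule_format, of x n \<gamma> c] assms by blast
qed

lemma conditionally_negative_on:
  assumes x: "x \<in> U" and Q: "finite Q" "Q \<subseteq> {\<gamma>. s \<gamma> = x}" and d: "(\<Sum>k\<in>Q. d k) = 0"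
  shows "(\<Sum>k\<in>Q. \<Sum>l\<in>Q. d k * d l * \<psi> (m k (i l))) \<le> 0"
proof -
  obtain h where h: "bij_betw h {..<card Q} Q"
    using ex_bij_betw_nat_finite[OF Q(1)] atLeast0LessThan by auto
  have hQ: "h k \<in> Q" if "k < card Q" for k using h that unfolding bij_betw_def by auto
  have reindex: "(\<Sum>k<card Q. F (h k)) = (\<Sum>k\<in>Q. F k)" for F :: "'a \<Rightarrow> real"
    using sum.reindex_bij_betw[OF h] by simp
  have "(\<Sum>k<card Q. \<Sum>l<card Q. (d \<circ> h) k * (d \<circ> h) l * \<psi> (m (h k) (i (h l)))) \<le> 0"
    using hQ Q(2) d by (intro conditionally_negative[OF x]) (auto simp: reindex[of d, simplified])
  moreover have "(\<Sum>k<card Q. \<Sum>l<card Q. (d \<circ> h) k * (d \<circ> h) l * \<psi> (m (h k) (i (h l))))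
      = (\<Sum>k\<in>Q. \<Sum>l\<in>Q. d k * d l * \<psi> (m k (i l)))"
  proof -
    have "(\<Sum>k<card Q. \<Sum>l<card Q. (d \<circ> h) k * (d \<circ> h) l * \<psi> (m (h k) (i (h l))))
        = (\<Sum>k<card Q. \<Sum>l\<in>Q. d (h k) * d l * \<psi> (m (h k) (i l)))"
      by (rule sum.cong[OF refl]) (simp add: reindex[of "\<lambda>l. d (h _) * d l * \<psi> (m (h _) (i l))"])
    also have "\<dots> = (\<Sum>k\<in>Q. \<Sum>l\<in>Q. d k * d l * \<psi> (m k (i l)))"
      by (rule reindex)
    finally show ?thesis .
  qed
  ultimately show ?thesis by simp
qed

lemma psi_nonneg: "0 \<le> \<psi> g"
proof -
  define \<gamma> where "\<gamma> k = (if k = (0::nat) then s g else g)" for k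
  define c where "c k = (if k = (0::nat) then 1 else -1::real)" for k
  have "(\<Sum>k<2. \<Sum>l<2. c k * c l * \<psi> (m (\<gamma> k) (i (\<gamma> l)))) \<le> 0"
    by (intro conditionally_negative) (auto simp: s_in_units \<gamma>_def c_def s_unit numeral_2_eq_2)
  moreover have "m (s g) (s g) = s g" using mult_s_right[of "s g"] s_unit[OF s_in_units] by simp
  moreover have "(\<Sum>k<2. \<Sum>l<2. c k * c l * \<psi> (m (\<gamma> k) (i (\<gamma> l)))) = - 2 * \<psi> g"
    using calculation(2)
    by (simp add: mult_s_right numeral_2_eq_2 \<gamma>_def c_def mult_inv_unit_right unit_mult_inv psi_inv psi_unit
        s_in_units inv_unit mult_inv_right r_in_units)
  ultimately show ?thesis by simp
qed

lemma psi_mult_inv_commute: "s k = s l \<Longrightarrow> \<psi> (m k (i l)) = \<psi> (m l (i k))"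
  by (metis inv_mult_inv psi_inv)

text \<open>Appending the unit \<open>x\<close> with coefficient \<open>-(\<Sum>c)\<close> produces coefficients summing to zero.\<close>
lemma conditionally_negative_pointed:
  assumes x: "x \<in> U" and P: "finite P" "P \<subseteq> {\<gamma>. s \<gamma> = x}"
  shows "(\<Sum>k\<in>P. \<Sum>l\<in>P. c k * c l * \<psi> (m k (i l))) \<le> 2 * (\<Sum>k\<in>P. c k) * (\<Sum>l\<in>P. c l * \<psi> l)"
proof -
  define S where "S = (\<Sum>k\<in>P. c k)"
  define Q where "Q = insert x P"
  define e where "e k = (if k \<in> P then c k else 0)" for k
  define d where "d k = e k - S * (if k = x then 1 else 0)" for k
  have Q: "finite Q" "x \<in> Q" "P \<subseteq> Q" "Q \<subseteq> {\<gamma>. s \<gamma> = x}"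
    using P x by (auto simp: Q_def s_unit)
  have "(\<Sum>k\<in>Q. d k) = (\<Sum>k\<in>Q. e k * 1) - S * (\<Sum>k\<in>Q. (if k = x then 1 else 0) * 1)"
    unfolding d_def by (simp add: sum_subtractf sum_distrib_left)
  also have "\<dots> = 0" unfolding e_def using Q by (simp only: sum_if_mem_mult sum_delta_mult) (simp add: S_def)
  finally have "(\<Sum>k\<in>Q. \<Sum>l\<in>Q. d k * d l * \<psi> (m k (i l))) \<le> 0"
    using conditionally_negative_on[OF x Q(1) Q(4)] by blast
  also have "(\<Sum>k\<in>Q. \<Sum>l\<in>Q. d k * d l * \<psi> (m k (i l))) =
      (\<Sum>k\<in>Q. \<Sum>l\<in>Q. e k * e l * \<psi> (m k (i l))) - S * (\<Sum>l\<in>Q. e l * \<psi> (m x (i l)))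
      - S * (\<Sum>k\<in>Q. e k * \<psi> (m k (i x))) + S * S * \<psi> (m x (i x))"
    unfolding d_def by (rule quadratic_form_shift_delta[OF Q(1,2)])
  also have "(\<Sum>k\<in>Q. \<Sum>l\<in>Q. e k * e l * \<psi> (m k (i l))) = (\<Sum>k\<in>P. \<Sum>l\<in>P. c k * c l * \<psi> (m k (i l)))"
  proof -
    have "(\<Sum>k\<in>Q. \<Sum>l\<in>Q. e k * e l * \<psi> (m k (i l))) = (\<Sum>k\<in>Q. e k * (\<Sum>l\<in>Q. e l * \<psi> (m k (i l))))"
      by (simp add: sum_distrib_left mult.assoc)
    also have "\<dots> = (\<Sum>k\<in>P. c k * (\<Sum>l\<in>P. c l * \<psi> (m k (i l))))"
      unfolding e_def using Q by (simp only: sum_if_mem_mult)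
    finally show ?thesis by (simp add: sum_distrib_left mult.assoc)
  qed
  also have "(\<Sum>l\<in>Q. e l * \<psi> (m x (i l))) = (\<Sum>l\<in>P. c l * \<psi> l)"
  proof -
    have "(\<Sum>l\<in>Q. e l * \<psi> (m x (i l))) = (\<Sum>l\<in>P. c l * \<psi> (m x (i l)))"
      unfolding e_def using Q by (simp only: sum_if_mem_mult)
    also have "\<dots> = (\<Sum>l\<in>P. c l * \<psi> l)"
      using P by (intro sum.cong refl) (auto simp: unit_mult_inv psi_inv)
    finally show ?thesis .
  qed
  also have "(\<Sum>k\<in>Q. e k * \<psi> (m k (i x))) = (\<Sum>l\<in>P. c l * \<psi> l)"
  proof -
    have "(\<Sum>k\<in>Q. e k * \<psi> (m k (i x))) = (\<Sum>k\<in>P. c k * \<psi> (m k (i x)))"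
      unfolding e_def using Q by (simp only: sum_if_mem_mult)
    also have "\<dots> = (\<Sum>l\<in>P. c l * \<psi> l)"
      using P by (intro sum.cong refl) (auto simp: mult_inv_unit_right)
    finally show ?thesis .
  qed
  also have "\<psi> (m x (i x)) = 0" using x mult_inv_unit_right[of x x] s_unit[OF x] psi_unit[OF x] by simp
  finally show ?thesis by (simp add: S_def)
qed

lemma psd_kernel_gromov_product:
  assumes x: "x \<in> U" and P: "finite P" "P \<subseteq> {\<gamma>. s \<gamma> = x}"
  shows "psd_kernel P (\<lambda>k l. \<psi> k + \<psi> l - \<psi> (m k (i l)))"
  unfolding psd_kernel_def
proof
  fix c :: "'a \<Rightarrow> real"
  define S where "S = (\<Sum>k\<in>P. c k)"
  have "(\<Sum>k\<in>P. \<Sum>l\<in>P. c k * c l * (\<psi> k + \<psi> l - \<psi> (m k (i l)))) =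
     (\<Sum>k\<in>P. \<Sum>l\<in>P. c k * \<psi> k * c l) + (\<Sum>k\<in>P. \<Sum>l\<in>P. c k * (c l * \<psi> l)) - (\<Sum>k\<in>P. \<Sum>l\<in>P. c k * c l * \<psi> (m k (i l)))"
    by (simp add: algebra_simps sum.distrib sum_subtractf)
  also have "\<dots> = 2 * S * (\<Sum>l\<in>P. c l * \<psi> l) - (\<Sum>k\<in>P. \<Sum>l\<in>P. c k * c l * \<psi> (m k (i l)))"
    by (simp add: sum_product[symmetric] S_def)
  finally show "0 \<le> (\<Sum>k\<in>P. \<Sum>l\<in>P. c k * c l * (\<psi> k + \<psi> l - \<psi> (m k (i l))))"
    using conditionally_negative_pointed[OF assms, of c] by (simp add: S_def)
qed

lemma positive_definite_exp_neg_psi: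
  assumes "0 \<le> t"
  shows "positive_definite (\<lambda>g. exp (- t * \<psi> g))"
  unfolding positive_definite_def
proof (intro ballI allI impI)
  fix x P assume x: "x \<in> U" and P: "finite P \<and> P \<subseteq> {\<gamma>. s \<gamma> = x}"
  have "symmetric_kernel P (\<lambda>k l. t * (\<psi> k + \<psi> l - \<psi> (m k (i l))))"
    using P psi_mult_inv_commute unfolding symmetric_kernel_def by auto
  then have "psd_kernel P (\<lambda>k l. exp (- t * \<psi> k) * exp (- t * \<psi> l) * exp (t * (\<psi> k + \<psi> l - \<psi> (m k (i l)))))"
    using P psd_kernel_gromov_product[OF x] assms
    by (intro psd_kernel_conj_diagonal psd_kernel_exp psd_kernel_scale) auto
  then show "psd_kernel P (\<lambda>k l. exp (- t * \<psi> (m k (i l))))"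
    by (simp add: exp_add[symmetric] algebra_simps)
qed

end

section \<open>The reduced norm\<close>

context twisted_groupoid
begin

abbreviation red_norm :: "('s \<Rightarrow> complex) \<Rightarrow> ereal" where
  "red_norm h \<equiv> rnorm G0 s mS iS p h"

definition test_vector :: "'g \<Rightarrow> ('g \<Rightarrow> complex) \<Rightarrow> bool" where
  "test_vector x \<xi> \<longleftrightarrow> x \<in> G0 \<and> finite {\<eta>. \<xi> \<eta> \<noteq> 0} \<and> (\<forall>\<eta>. \<xi> \<eta> \<noteq> 0 \<longrightarrow> s \<eta> = x) \<and>
                       (\<Sum>\<eta>\<in>{\<eta>. \<xi> \<eta> \<noteq> 0}. (cmod (\<xi> \<eta>))\<^sup>2) \<le> 1"

definition regrep_norm :: "('s \<Rightarrow> complex) \<Rightarrow> ('g \<Rightarrow> complex) \<Rightarrow> 'g set \<Rightarrow> real" where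
  "regrep_norm h \<xi> F = L2_set (\<lambda>\<gamma>. cmod (regrep mS iS p h \<xi> \<gamma>)) F"

lemma regrep_norm_le_red_norm:
  assumes "test_vector x \<xi>" "finite F" "F \<subseteq> {\<gamma>. s \<gamma> = x}"
  shows "ereal (regrep_norm h \<xi> F) \<le> red_norm h"
proof -
  have "ereal (regrep_norm h \<xi> F) \<le> l2n {\<gamma>. s \<gamma> = x} (regrep mS iS p h \<xi>)"
    unfolding l2n_def regrep_norm_def L2_set_def using assms(2,3) by (intro SUP_upper) auto
  also have "\<dots> \<le> red_norm h"
    unfolding rnorm_def using assms(1) unfolding test_vector_def
    by (intro SUP_upper2[where i="(x, \<xi>)"]) auto
  finally show ?thesis .
qed

lemma red_norm_leI:
  assumes "\<And>x \<xi> F. test_vector x \<xi> \<Longrightarrow> finite F \<Longrightarrow> F \<subseteq> {\<gamma>. s \<gamma> = x} \<Longrightarrow> ereal (regrep_norm h \<xi> F) \<le> B"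
  shows "red_norm h \<le> B"
  unfolding rnorm_def
proof (rule SUP_least, clarify)
  fix x \<xi> assume "x \<in> G0" "finite {\<eta>. \<xi> \<eta> \<noteq> 0}" "\<forall>\<eta>. \<xi> \<eta> \<noteq> 0 \<longrightarrow> s \<eta> = x"
    "(\<Sum>\<eta>\<in>{\<eta>. \<xi> \<eta> \<noteq> 0}. (cmod (\<xi> \<eta>))\<^sup>2) \<le> 1"
  then have "test_vector x \<xi>" unfolding test_vector_def by blast
  then show "l2n {\<gamma>. s \<gamma> = x} (regrep mS iS p h \<xi>) \<le> B"
    unfolding l2n_def using assms by (auto intro!: SUP_least simp: regrep_norm_def L2_set_def)
qed

lemma test_vector_delta: "x \<in> G0 \<Longrightarrow> test_vector x (\<lambda>\<eta>. if \<eta> = x then 1 else 0)"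
  unfolding test_vector_def by (auto simp: G.s_unit)

lemma red_norm_nonneg: "0 \<le> red_norm h"
proof -
  have "ereal (regrep_norm h (\<lambda>\<eta>. if \<eta> = s g then 1 else 0) {}) \<le> red_norm h" for g
    by (rule regrep_norm_le_red_norm[OF test_vector_delta]) (auto simp: G.s_in_units)
  then show ?thesis by (simp add: regrep_norm_def zero_ereal_def)
qed

lemma regrep_norm_le:
  "red_norm h \<le> ereal R \<Longrightarrow> test_vector x \<xi> \<Longrightarrow> finite F \<Longrightarrow> F \<subseteq> {\<gamma>. s \<gamma> = x} \<Longrightarrow>
    regrep_norm h \<xi> F \<le> R"
  using regrep_norm_le_red_norm[of x \<xi> F h] by (metis ereal_less_eq(3) order_trans)

lemma regrep_eq_sum_superset:
  assumes "finite E" "{\<eta>. \<xi> \<eta> \<noteq> 0} \<subseteq> E"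
  shows "regrep mS iS p h \<xi> \<gamma> = (\<Sum>\<eta>\<in>E. h (mS (lift p \<gamma>) (iS (lift p \<eta>))) * \<xi> \<eta>)"
  unfolding regrep_def using assms by (intro sum.mono_neutral_left) auto

lemma norm_regrep_entry:
  assumes "is_section r mS p iota h" "s \<gamma> = s \<eta>"
  shows "cmod (h (mS (lift p \<gamma>) (iS (lift p \<eta>)))) = cmod (h (lift p (m \<gamma> (i \<eta>))))"
  using section_norm_eq[OF assms(1)] by (simp add: p_regrep_entry[OF assms(2)])

lemma regrep_norm_triangle:
  "regrep_norm (\<lambda>\<sigma>. a \<sigma> + b \<sigma>) \<xi> F \<le> regrep_norm a \<xi> F + regrep_norm b \<xi> F"
proof -
  have "regrep mS iS p (\<lambda>\<sigma>. a \<sigma> + b \<sigma>) \<xi> \<gamma> = regrep mS iS p a \<xi> \<gamma> + regrep mS iS p b \<xi> \<gamma>" for \<gamma>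
    unfolding regrep_def by (simp add: distrib_right sum.distrib)
  then have "regrep_norm (\<lambda>\<sigma>. a \<sigma> + b \<sigma>) \<xi> F
      \<le> L2_set (\<lambda>\<gamma>. cmod (regrep mS iS p a \<xi> \<gamma>) + cmod (regrep mS iS p b \<xi> \<gamma>)) F"
    unfolding regrep_norm_def by (intro L2_set_mono) (simp_all add: norm_triangle_ineq)
  then show ?thesis unfolding regrep_norm_def by (rule order_trans[OF _ L2_set_triangle_ineq])
qed

lemma red_norm_triangle: "red_norm (\<lambda>\<sigma>. a \<sigma> + b \<sigma>) \<le> red_norm a + red_norm b"
proof (rule red_norm_leI)
  fix x \<xi> F assume *: "test_vector x \<xi>" "finite F" "F \<subseteq> {\<gamma>. s \<gamma> = x}"
  have "ereal (regrep_norm (\<lambda>\<sigma>. a \<sigma> + b \<sigma>) \<xi> F) \<le> ereal (regrep_norm a \<xi> F) + ereal (regrep_norm b \<xi> F)"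
    using regrep_norm_triangle by simp
  also have "\<dots> \<le> red_norm a + red_norm b"
    by (intro add_mono regrep_norm_le_red_norm[OF *])
  finally show "ereal (regrep_norm (\<lambda>\<sigma>. a \<sigma> + b \<sigma>) \<xi> F) \<le> red_norm a + red_norm b" .
qed

lemma red_norm_minus_commute: "red_norm (\<lambda>\<sigma>. a \<sigma> - b \<sigma>) = red_norm (\<lambda>\<sigma>. b \<sigma> - a \<sigma>)"
proof -
  have "regrep mS iS p (\<lambda>\<sigma>. a \<sigma> - b \<sigma>) \<xi> \<gamma> = - regrep mS iS p (\<lambda>\<sigma>. b \<sigma> - a \<sigma>) \<xi> \<gamma>" for \<xi> \<gamma>
    unfolding regrep_def by (simp add: sum_negf[symmetric] algebra_simps)
  then show ?thesis unfolding rnorm_def l2n_def by simp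
qed

lemma regrep_sum_sq_le:
  assumes "red_norm h \<le> ereal R" "test_vector x \<xi>" "finite F" "F \<subseteq> {\<gamma>. s \<gamma> = x}"
  shows "(\<Sum>\<gamma>\<in>F. (cmod (regrep mS iS p h \<xi> \<gamma>))\<^sup>2) \<le> R\<^sup>2"
proof -
  have "regrep_norm h \<xi> F \<le> R" by (rule regrep_norm_le[OF assms])
  then have "(regrep_norm h \<xi> F)\<^sup>2 \<le> R\<^sup>2"
    by (intro power_mono) (simp_all add: regrep_norm_def)
  then show ?thesis unfolding regrep_norm_def L2_set_def by (simp add: sum_nonneg)
qed

lemma regrep_sum_sq_le_scaled:
  assumes R: "red_norm h \<le> ereal R" and x: "x \<in> G0"
    and \<zeta>: "finite {\<eta>. \<zeta> \<eta> \<noteq> 0}" "\<forall>\<eta>. \<zeta> \<eta> \<noteq> 0 \<longrightarrow> s \<eta> = x"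
    and F: "finite F" "F \<subseteq> {\<gamma>. s \<gamma> = x}"
  shows "(\<Sum>\<gamma>\<in>F. (cmod (regrep mS iS p h \<zeta> \<gamma>))\<^sup>2) \<le> R\<^sup>2 * (\<Sum>\<eta>\<in>{\<eta>. \<zeta> \<eta> \<noteq> 0}. (cmod (\<zeta> \<eta>))\<^sup>2)"
proof (cases "{\<eta>. \<zeta> \<eta> \<noteq> 0} = {}")
  case True
  then show ?thesis by (simp add: regrep_def)
next
  case False
  define N where "N = (\<Sum>\<eta>\<in>{\<eta>. \<zeta> \<eta> \<noteq> 0}. (cmod (\<zeta> \<eta>))\<^sup>2)"
  have N: "0 < N" unfolding N_def using False \<zeta>(1) by (intro sum_pos) auto
  define \<xi> where "\<xi> \<eta> = \<zeta> \<eta> / complex_of_real (sqrt N)" for \<eta>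
  have supp: "{\<eta>. \<xi> \<eta> \<noteq> 0} = {\<eta>. \<zeta> \<eta> \<noteq> 0}" using N by (auto simp: \<xi>_def)
  have "(\<Sum>\<eta>\<in>{\<eta>. \<xi> \<eta> \<noteq> 0}. (cmod (\<xi> \<eta>))\<^sup>2) = (\<Sum>\<eta>\<in>{\<eta>. \<zeta> \<eta> \<noteq> 0}. (cmod (\<zeta> \<eta>))\<^sup>2 / N)"
    unfolding supp using N by (intro sum.cong refl) (simp add: \<xi>_def norm_divide power_divide)
  also have "\<dots> = 1" using N by (simp add: sum_divide_distrib[symmetric] N_def)
  finally have "test_vector x \<xi>" unfolding test_vector_def using x \<zeta> supp by auto
  then have "(\<Sum>\<gamma>\<in>F. (cmod (regrep mS iS p h \<xi> \<gamma>))\<^sup>2) \<le> R\<^sup>2"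
    by (rule regrep_sum_sq_le[OF R _ F])
  moreover have "regrep mS iS p h \<xi> \<gamma> = regrep mS iS p h \<zeta> \<gamma> / complex_of_real (sqrt N)" for \<gamma>
    unfolding regrep_def supp by (simp add: \<xi>_def sum_divide_distrib)
  ultimately show ?thesis
    using N by (simp add: norm_divide power_divide sum_divide_distrib[symmetric] divide_le_eq N_def mult.commute)
qed

lemma column_sum_sq_le:
  assumes h: "is_section r mS p iota h" and R: "red_norm h \<le> ereal R"
    and x: "x \<in> G0" and F: "finite F" "F \<subseteq> {\<gamma>. s \<gamma> = x}"
  shows "(\<Sum>\<gamma>\<in>F. (cmod (h (lift p \<gamma>)))\<^sup>2) \<le> R\<^sup>2"
proof -
  let ?\<xi> = "\<lambda>\<eta>. if \<eta> = x then 1 else (0::complex)"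
  have "cmod (regrep mS iS p h ?\<xi> \<gamma>) = cmod (h (lift p \<gamma>))" if "\<gamma> \<in> F" for \<gamma>
  proof -
    have "{\<eta>. ?\<xi> \<eta> \<noteq> 0} = {x}" by auto
    then have "regrep mS iS p h ?\<xi> \<gamma> = h (mS (lift p \<gamma>) (iS (lift p x)))"
      unfolding regrep_def by simp
    also have "cmod \<dots> = cmod (h (lift p (m \<gamma> (i x))))"
      using that F x by (intro norm_regrep_entry[OF h]) (auto simp: G.s_unit)
    also have "m \<gamma> (i x) = \<gamma>" using that F by (auto intro: G.mult_inv_unit_right)
    finally show ?thesis .
  qed
  then have "(\<Sum>\<gamma>\<in>F. (cmod (h (lift p \<gamma>)))\<^sup>2) = (\<Sum>\<gamma>\<in>F. (cmod (regrep mS iS p h ?\<xi> \<gamma>))\<^sup>2)"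
    by simp
  also have "\<dots> \<le> R\<^sup>2" by (rule regrep_sum_sq_le[OF R test_vector_delta[OF x] F])
  finally show ?thesis .
qed

lemma norm_le_red_norm:
  assumes h: "is_section r mS p iota h" and R: "red_norm h \<le> ereal R"
  shows "cmod (h \<sigma>) \<le> R"
proof -
  have "(\<Sum>\<gamma>\<in>{p \<sigma>}. (cmod (h (lift p \<gamma>)))\<^sup>2) \<le> R\<^sup>2"
    by (rule column_sum_sq_le[OF h R G.s_in_units]) auto
  then have "(cmod (h \<sigma>))\<^sup>2 \<le> R\<^sup>2" using section_norm_lift[OF h] by simp
  moreover have "0 \<le> R" using red_norm_nonneg[of h] R by (metis ereal_less_eq(5) order_trans zero_ereal_def)
  ultimately show ?thesis by (simp add: power2_le_iff_abs_le)
qed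

text \<open>Rows are estimated by testing at the unit \<open>x\<close> against the conjugate of the row itself.\<close>
lemma row_sum_sq_le:
  assumes h: "is_section r mS p iota h" and R: "red_norm h \<le> ereal R"
    and x: "x \<in> G0" and F: "finite F" "F \<subseteq> {\<gamma>. r \<gamma> = x}"
  shows "(\<Sum>\<gamma>\<in>F. (cmod (h (lift p \<gamma>)))\<^sup>2) \<le> R\<^sup>2"
proof -
  define E where "E = i ` F"
  define a where "a \<eta> = h (mS (lift p x) (iS (lift p \<eta>)))" for \<eta>
  define \<zeta> where "\<zeta> \<eta> = (if \<eta> \<in> E then cnj (a \<eta>) else 0)" for \<eta>
  define T where "T = (\<Sum>\<eta>\<in>E. (cmod (a \<eta>))\<^sup>2)"
  have E: "finite E" "E \<subseteq> {\<eta>. s \<eta> = x}" using F by (auto simp: E_def G.s_inv)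
  have supp: "{\<eta>. \<zeta> \<eta> \<noteq> 0} \<subseteq> E" by (auto simp: \<zeta>_def)
  have T0: "0 \<le> T" unfolding T_def by (simp add: sum_nonneg)
  have nz: "(\<Sum>\<eta>\<in>{\<eta>. \<zeta> \<eta> \<noteq> 0}. (cmod (\<zeta> \<eta>))\<^sup>2) = T"
  proof -
    have "(\<Sum>\<eta>\<in>{\<eta>. \<zeta> \<eta> \<noteq> 0}. (cmod (\<zeta> \<eta>))\<^sup>2) = (\<Sum>\<eta>\<in>E. (cmod (\<zeta> \<eta>))\<^sup>2)"
      using supp E(1) by (intro sum.mono_neutral_left) auto
    then show ?thesis unfolding T_def \<zeta>_def by simp
  qed
  have "regrep mS iS p h \<zeta> x = (\<Sum>\<eta>\<in>E. a \<eta> * \<zeta> \<eta>)"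
    unfolding a_def by (rule regrep_eq_sum_superset[OF E(1) supp])
  also have "\<dots> = (\<Sum>\<eta>\<in>E. complex_of_real ((cmod (a \<eta>))\<^sup>2))"
    by (intro sum.cong refl) (simp only: \<zeta>_def if_True complex_norm_square)
  also have "\<dots> = complex_of_real T" unfolding T_def by simp
  finally have "(\<Sum>\<gamma>\<in>{x}. (cmod (regrep mS iS p h \<zeta> \<gamma>))\<^sup>2) = T * T"
    using T0 by (simp add: power2_eq_square)
  moreover have "(\<Sum>\<gamma>\<in>{x}. (cmod (regrep mS iS p h \<zeta> \<gamma>))\<^sup>2) \<le> R\<^sup>2 * T"
    using supp E x finite_subset[OF supp E(1)] nz
    by (intro order_trans[OF regrep_sum_sq_le_scaled[OF R x]]) (auto simp: G.s_unit)
  ultimately have TR: "T \<le> R\<^sup>2" using T0 by (cases "T = 0") (auto simp: mult_le_cancel_right)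
  have "inj_on i F" by (rule inj_on_inverseI[where g=i]) simp
  then have "T = (\<Sum>\<gamma>\<in>F. (cmod (a (i \<gamma>)))\<^sup>2)" unfolding T_def E_def by (simp add: sum.reindex)
  also have "\<dots> = (\<Sum>\<gamma>\<in>F. (cmod (h (lift p \<gamma>)))\<^sup>2)"
  proof (intro sum.cong refl)
    fix \<gamma> assume g: "\<gamma> \<in> F"
    then have "cmod (a (i \<gamma>)) = cmod (h (lift p (m x (i (i \<gamma>)))))"
      unfolding a_def using F x by (intro norm_regrep_entry[OF h]) (auto simp: G.s_unit G.s_inv)
    also have "m x (i (i \<gamma>)) = \<gamma>" using g F by (auto simp: G.mult_r_left)
    finally show "(cmod (a (i \<gamma>)))\<^sup>2 = (cmod (h (lift p \<gamma>)))\<^sup>2" by simp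
  qed
  finally show ?thesis using TR by simp
qed

lemma fiber_sum_sq_le:
  assumes "is_section r mS p iota h" "red_norm h \<le> ereal R"
    and "x \<in> G0" "finite F" "F \<subseteq> {\<gamma>. s \<gamma> = x} \<or> F \<subseteq> {\<gamma>. r \<gamma> = x}"
  shows "(\<Sum>\<gamma>\<in>F. (cmod (h (lift p \<gamma>)))\<^sup>2) \<le> R\<^sup>2"
  using assms column_sum_sq_le row_sum_sq_le by blast

lemma regrep_norm_le_sup:
  assumes "\<And>\<sigma>. cmod (h \<sigma>) \<le> \<rho>" "test_vector x \<xi>" "finite F"
  shows "regrep_norm h \<xi> F \<le> \<rho> * real (card {\<eta>. \<xi> \<eta> \<noteq> 0}) * sqrt (real (card F))"
proof -
  define E where "E = {\<eta>. \<xi> \<eta> \<noteq> 0}"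
  have E: "finite E" "(\<Sum>\<eta>\<in>E. (cmod (\<xi> \<eta>))\<^sup>2) \<le> 1"
    using assms(2) unfolding test_vector_def E_def by auto
  have \<xi>: "cmod (\<xi> \<eta>) \<le> 1" if "\<eta> \<in> E" for \<eta>
  proof -
    have "(cmod (\<xi> \<eta>))\<^sup>2 \<le> (\<Sum>\<eta>\<in>E. (cmod (\<xi> \<eta>))\<^sup>2)"
      using that E(1) by (intro member_le_sum) auto
    also have "\<dots> \<le> 1" by (rule E(2))
    finally show ?thesis by (simp add: power_le_one_iff)
  qed
  have \<rho>: "0 \<le> \<rho>" using assms(1) norm_ge_zero order_trans by blast
  have "cmod (regrep mS iS p h \<xi> \<gamma>) \<le> \<rho> * real (card E)" for \<gamma>
  proof -
    have "cmod (regrep mS iS p h \<xi> \<gamma>) \<le> (\<Sum>\<eta>\<in>E. cmod (h (mS (lift p \<gamma>) (iS (lift p \<eta>)))) * cmod (\<xi> \<eta>))"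
      unfolding regrep_def E_def by (rule order_trans[OF norm_sum]) (simp add: norm_mult)
    also have "\<dots> \<le> (\<Sum>\<eta>\<in>E. \<rho> * 1)"
      using assms(1) \<xi> \<rho> by (intro sum_mono mult_mono) auto
    finally show ?thesis by (simp add: mult.commute)
  qed
  then have "regrep_norm h \<xi> F \<le> L2_set (\<lambda>_. \<rho> * real (card E)) F"
    unfolding regrep_norm_def by (intro L2_set_mono) auto
  also have "\<dots> = \<rho> * real (card E) * sqrt (real (card F))"
    using \<rho> by (simp add: L2_set_def power_mult_distrib real_sqrt_mult)
  finally show ?thesis unfolding E_def .
qed

end

section \<open>Schur multipliers\<close>

context twisted_groupoid
begin

lemma norm_regrep_multiplier_sq_le:
  assumes E: "finite E" "{\<eta>. \<xi> \<eta> \<noteq> 0} \<subseteq> E" "\<And>\<eta>. \<eta> \<in> E \<Longrightarrow> s \<eta> = s \<gamma>"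
    and factor: "\<And>\<eta>. \<eta> \<in> E \<Longrightarrow> \<phi> (m \<gamma> (i \<eta>)) = (\<Sum>j<n. V \<gamma> j * V \<eta> j)"
    and diag: "(\<Sum>j<n. (V \<gamma> j)\<^sup>2) = 1"
  shows "(cmod (regrep mS iS p (\<lambda>\<sigma>. complex_of_real (\<phi> (p \<sigma>)) * h \<sigma>) \<xi> \<gamma>))\<^sup>2
    \<le> (\<Sum>j<n. (cmod (regrep mS iS p h (\<lambda>\<eta>. complex_of_real (V \<eta> j) * \<xi> \<eta>) \<gamma>))\<^sup>2)"
proof -
  define A where "A \<eta> = h (mS (lift p \<gamma>) (iS (lift p \<eta>)))" for \<eta>
  define \<zeta> where "\<zeta> j = (\<lambda>\<eta>. complex_of_real (V \<eta> j) * \<xi> \<eta>)" for j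
  have "regrep mS iS p (\<lambda>\<sigma>. complex_of_real (\<phi> (p \<sigma>)) * h \<sigma>) \<xi> \<gamma>
      = (\<Sum>\<eta>\<in>E. complex_of_real (\<phi> (m \<gamma> (i \<eta>))) * A \<eta> * \<xi> \<eta>)"
    unfolding regrep_eq_sum_superset[OF E(1,2)] A_def
    using E(3) by (intro sum.cong refl) (simp add: p_regrep_entry)
  also have "\<dots> = (\<Sum>\<eta>\<in>E. \<Sum>j<n. complex_of_real (V \<gamma> j) * (A \<eta> * \<zeta> j \<eta>))"
    using factor by (intro sum.cong refl) (simp add: \<zeta>_def sum_distrib_left sum_distrib_right mult_ac)
  also have "\<dots> = (\<Sum>j<n. complex_of_real (V \<gamma> j) * regrep mS iS p h (\<zeta> j) \<gamma>)"
    using E(2) by (simp add: sum.swap[of _ E] sum_distrib_left A_def \<zeta>_def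
        regrep_eq_sum_superset[OF E(1)] subset_iff)
  finally have "cmod (regrep mS iS p (\<lambda>\<sigma>. complex_of_real (\<phi> (p \<sigma>)) * h \<sigma>) \<xi> \<gamma>)
      \<le> (\<Sum>j<n. \<bar>V \<gamma> j\<bar> * cmod (regrep mS iS p h (\<zeta> j) \<gamma>))"
    by (simp add: order_trans[OF norm_sum] norm_mult)
  then have "(cmod (regrep mS iS p (\<lambda>\<sigma>. complex_of_real (\<phi> (p \<sigma>)) * h \<sigma>) \<xi> \<gamma>))\<^sup>2
      \<le> (\<Sum>j<n. \<bar>V \<gamma> j\<bar> * cmod (regrep mS iS p h (\<zeta> j) \<gamma>))\<^sup>2"
    by (intro power_mono) auto
  also have "\<dots> \<le> (\<Sum>j<n. \<bar>V \<gamma> j\<bar>\<^sup>2) * (\<Sum>j<n. (cmod (regrep mS iS p h (\<zeta> j) \<gamma>))\<^sup>2)"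
    by (rule Cauchy_Schwarz_ineq_sum)
  finally show ?thesis using diag by (simp add: \<zeta>_def)
qed


lemma sum_regrep_weighted_sq_le:
  assumes R: "red_norm h \<le> ereal R" and x: "x \<in> G0"
    and E: "finite E" "E \<subseteq> {\<eta>. s \<eta> = x}" "{\<eta>. \<xi> \<eta> \<noteq> 0} \<subseteq> E"
    and F: "finite F" "F \<subseteq> {\<gamma>. s \<gamma> = x}"
  shows "(\<Sum>j<n. \<Sum>\<gamma>\<in>F. (cmod (regrep mS iS p h (\<lambda>\<eta>. complex_of_real (V \<eta> j) * \<xi> \<eta>) \<gamma>))\<^sup>2)
    \<le> R\<^sup>2 * (\<Sum>\<eta>\<in>E. (\<Sum>j<n. (V \<eta> j)\<^sup>2) * (cmod (\<xi> \<eta>))\<^sup>2)"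
proof -
  define \<zeta> where "\<zeta> j = (\<lambda>\<eta>. complex_of_real (V \<eta> j) * \<xi> \<eta>)" for j
  have supp: "{\<eta>. \<zeta> j \<eta> \<noteq> 0} \<subseteq> E" for j using E(3) by (auto simp: \<zeta>_def)
  have "(\<Sum>j<n. \<Sum>\<gamma>\<in>F. (cmod (regrep mS iS p h (\<zeta> j) \<gamma>))\<^sup>2)
      \<le> (\<Sum>j<n. R\<^sup>2 * (\<Sum>\<eta>\<in>{\<eta>. \<zeta> j \<eta> \<noteq> 0}. (cmod (\<zeta> j \<eta>))\<^sup>2))"
  proof (rule sum_mono)
    fix j
    show "(\<Sum>\<gamma>\<in>F. (cmod (regrep mS iS p h (\<zeta> j) \<gamma>))\<^sup>2) \<le> R\<^sup>2 * (\<Sum>\<eta>\<in>{\<eta>. \<zeta> j \<eta> \<noteq> 0}. (cmod (\<zeta> j \<eta>))\<^sup>2)"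
      using supp[of j] E finite_subset[OF supp[of j] E(1)]
      by (intro regrep_sum_sq_le_scaled[OF R x _ _ F]) auto
  qed
  also have "\<dots> = (\<Sum>j<n. R\<^sup>2 * (\<Sum>\<eta>\<in>E. (V \<eta> j)\<^sup>2 * (cmod (\<xi> \<eta>))\<^sup>2))"
  proof -
    have "(\<Sum>\<eta>\<in>{\<eta>. \<zeta> j \<eta> \<noteq> 0}. (cmod (\<zeta> j \<eta>))\<^sup>2) = (\<Sum>\<eta>\<in>E. (cmod (\<zeta> j \<eta>))\<^sup>2)" for j
      using supp[of j] E(1) by (intro sum.mono_neutral_left) auto
    then show ?thesis by (simp add: \<zeta>_def norm_mult power_mult_distrib)
  qed
  also have "\<dots> = R\<^sup>2 * (\<Sum>\<eta>\<in>E. (\<Sum>j<n. (V \<eta> j)\<^sup>2) * (cmod (\<xi> \<eta>))\<^sup>2)"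
    by (simp add: sum_distrib_left[symmetric] sum_distrib_right sum.swap[of _ E])
  finally show ?thesis unfolding \<zeta>_def .
qed

text \<open>Factor the kernel as a Gram matrix \<open>V V\<^sup>T\<close>, whose rows have norm \<open>1\<close> because \<open>\<phi> = 1\<close> on the
  units; by Cauchy--Schwarz the product applied to \<open>\<xi>\<close> is then dominated by \<open>h\<close> applied to the
  vectors \<open>V\<^sub>j \<xi>\<close>.\<close>
lemma red_norm_positive_definite_mult_le:
  assumes pd: "G.positive_definite \<phi>" and sym: "\<And>g. \<phi> (i g) = \<phi> g"
    and unit: "\<And>x. x \<in> G0 \<Longrightarrow> \<phi> x = 1"
  shows "red_norm (\<lambda>\<sigma>. complex_of_real (\<phi> (p \<sigma>)) * h \<sigma>) \<le> red_norm h"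
proof (cases "red_norm h")
  case (real R)
  have R: "red_norm h \<le> ereal R" "0 \<le> R" using real red_norm_nonneg[of h] by auto
  show ?thesis unfolding real
  proof (rule red_norm_leI)
    fix x \<xi> F assume a: "test_vector x \<xi>" and F: "finite F" "F \<subseteq> {\<gamma>. s \<gamma> = x}"
    define E where "E = {\<eta>. \<xi> \<eta> \<noteq> 0}"
    have x: "x \<in> G0" and E: "finite E" "E \<subseteq> {\<eta>. s \<eta> = x}" and \<xi>: "(\<Sum>\<eta>\<in>E. (cmod (\<xi> \<eta>))\<^sup>2) \<le> 1"
      using a unfolding test_vector_def E_def by auto
    define Q where "Q = F \<union> E"
    have Q: "finite Q" "Q \<subseteq> {\<gamma>. s \<gamma> = x}" using F E by (auto simp: Q_def)
    have "psd_kernel Q (\<lambda>k l. \<phi> (m k (i l)))"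
      using pd x Q unfolding G.positive_definite_def by blast
    moreover have "symmetric_kernel Q (\<lambda>k l. \<phi> (m k (i l)))"
      unfolding symmetric_kernel_def
    proof (intro ballI)
      fix k l assume "k \<in> Q" "l \<in> Q"
      then have "s k = s l" using Q(2) by auto
      then show "\<phi> (m k (i l)) = \<phi> (m l (i k))"
        using sym[of "m k (i l)"] G.inv_mult_inv by simp
    qed
    ultimately obtain n :: nat and V where V: "\<forall>k\<in>Q. \<forall>l\<in>Q. \<phi> (m k (i l)) = (\<Sum>j<n. V k j * V l j)"
      using psd_kernel_gram[OF Q(1)] by blast
    have diag: "(\<Sum>j<n. (V k j)\<^sup>2) = 1" if "k \<in> Q" for k
      using V[rule_format, OF that that] unit[OF G.r_in_units[of k]]
      by (simp add: G.mult_inv_right power2_eq_square)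
    have "(\<Sum>\<gamma>\<in>F. (cmod (regrep mS iS p (\<lambda>\<sigma>. complex_of_real (\<phi> (p \<sigma>)) * h \<sigma>) \<xi> \<gamma>))\<^sup>2)
        \<le> (\<Sum>\<gamma>\<in>F. \<Sum>j<n. (cmod (regrep mS iS p h (\<lambda>\<eta>. complex_of_real (V \<eta> j) * \<xi> \<eta>) \<gamma>))\<^sup>2)"
      using V diag F E unfolding Q_def E_def
      by (intro sum_mono norm_regrep_multiplier_sq_le[OF E(1)]) (auto simp: E_def subset_iff)
    also have "\<dots> = (\<Sum>j<n. \<Sum>\<gamma>\<in>F. (cmod (regrep mS iS p h (\<lambda>\<eta>. complex_of_real (V \<eta> j) * \<xi> \<eta>) \<gamma>))\<^sup>2)"
      by (rule sum.swap)
    also have "\<dots> \<le> R\<^sup>2 * (\<Sum>\<eta>\<in>E. (\<Sum>j<n. (V \<eta> j)\<^sup>2) * (cmod (\<xi> \<eta>))\<^sup>2)"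
      using E F by (intro sum_regrep_weighted_sq_le[OF R(1) x]) (auto simp: E_def)
    also have "\<dots> \<le> R\<^sup>2" using diag \<xi> by (simp add: Q_def mult_left_le)
    finally have "(regrep_norm (\<lambda>\<sigma>. complex_of_real (\<phi> (p \<sigma>)) * h \<sigma>) \<xi> F)\<^sup>2 \<le> R\<^sup>2"
      unfolding regrep_norm_def L2_set_def by (simp add: sum_nonneg)
    then show "ereal (regrep_norm (\<lambda>\<sigma>. complex_of_real (\<phi> (p \<sigma>)) * h \<sigma>) \<xi> F) \<le> ereal R"
      using R(2) by (simp add: power2_le_iff_abs_le regrep_norm_def)
  qed
qed (use red_norm_nonneg[of h] in auto)

end

section \<open>Fibres of compact sets in etale groupoids\<close>

lemma inj_on_fiber_card_le_1:
  assumes "inj_on q W"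
  shows "finite (W \<inter> {\<gamma>. q \<gamma> = x}) \<and> card (W \<inter> {\<gamma>. q \<gamma> = x}) \<le> 1"
proof -
  have "W \<inter> {\<gamma>. q \<gamma> = x} = {} \<or> (\<exists>a. W \<inter> {\<gamma>. q \<gamma> = x} = {a})"
    using assms unfolding inj_on_def by blast
  then show ?thesis by auto
qed

lemma compact_fibers_card_bounded:
  assumes "\<forall>g. \<exists>V. open V \<and> g \<in> V \<and> inj_on q V" and "compact C"
  shows "\<exists>N. \<forall>x. finite (C \<inter> {\<gamma>. q \<gamma> = x}) \<and> card (C \<inter> {\<gamma>. q \<gamma> = x}) \<le> N"
proof -
  obtain W where "\<forall>g. open (W g) \<and> g \<in> W g \<and> inj_on q (W g)"
    using choice[OF assms(1)] by blast
  then have W: "\<And>g. open (W g) \<and> g \<in> W g \<and> inj_on q (W g)" by blast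
  obtain T where T: "T \<subseteq> C" "finite T" "C \<subseteq> (\<Union>c\<in>T. W c)"
    by (rule compactE_image[OF assms(2), of C W]) (use W in auto)
  have "finite (C \<inter> {\<gamma>. q \<gamma> = x}) \<and> card (C \<inter> {\<gamma>. q \<gamma> = x}) \<le> card T" for x
  proof -
    have sub: "C \<inter> {\<gamma>. q \<gamma> = x} \<subseteq> (\<Union>c\<in>T. W c \<inter> {\<gamma>. q \<gamma> = x})" using T(3) by auto
    have W1: "finite (W c \<inter> {\<gamma>. q \<gamma> = x}) \<and> card (W c \<inter> {\<gamma>. q \<gamma> = x}) \<le> 1" for c
      by (rule inj_on_fiber_card_le_1) (use W in blast)
    have fin: "finite (\<Union>c\<in>T. W c \<inter> {\<gamma>. q \<gamma> = x})" using T(2) W1 by (intro finite_UN_I) auto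
    have "card (C \<inter> {\<gamma>. q \<gamma> = x}) \<le> card (\<Union>c\<in>T. W c \<inter> {\<gamma>. q \<gamma> = x})"
      by (rule card_mono[OF fin sub])
    also have "\<dots> \<le> (\<Sum>c\<in>T. card (W c \<inter> {\<gamma>. q \<gamma> = x}))" by (rule card_UN_le[OF T(2)])
    also have "\<dots> \<le> (\<Sum>c\<in>T. 1)" by (rule sum_mono) (use W1 in blast)
    finally show ?thesis using finite_subset[OF sub fin] by simp
  qed
  then show ?thesis by blast
qed

context twisted_groupoid
begin

definition bounded_fibers :: "'g set \<Rightarrow> nat \<Rightarrow> bool" where
  "bounded_fibers K N \<longleftrightarrow> (\<forall>x. finite (K \<inter> {\<gamma>. s \<gamma> = x}) \<and> card (K \<inter> {\<gamma>. s \<gamma> = x}) \<le> N \<and>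
                                 finite (K \<inter> {\<gamma>. r \<gamma> = x}) \<and> card (K \<inter> {\<gamma>. r \<gamma> = x}) \<le> N)"

lemma r_locally_injective: "\<forall>g. \<exists>V. open V \<and> g \<in> V \<and> inj_on r V"
proof
  fix g
  obtain V h where "open V" "g \<in> V" "homeomorphism V (r ` V) r h"
    using etale unfolding etale_def by blast
  then show "\<exists>V. open V \<and> g \<in> V \<and> inj_on r V"
    unfolding homeomorphism_def by (metis inj_on_inverseI)
qed

lemma s_locally_injective: "\<forall>g. \<exists>V. open V \<and> g \<in> V \<and> inj_on s V"
proof
  fix g
  obtain V where V: "open V" "i g \<in> V" "inj_on r V" using r_locally_injective by blast
  have "open (i -` V)"
    using inv_continuous V(1) continuous_on_open_vimage[OF open_UNIV] by auto
  moreover have "inj_on s (i -` V)"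
    using V(3) unfolding inj_on_def by (metis G.inv_inv G.r_inv vimageE)
  ultimately show "\<exists>V. open V \<and> g \<in> V \<and> inj_on s V" using V(2) by blast
qed

lemma compact_bounded_fibers:
  assumes "compact C"
  obtains N where "bounded_fibers C N"
proof -
  obtain N1 where "\<forall>x. finite (C \<inter> {\<gamma>. s \<gamma> = x}) \<and> card (C \<inter> {\<gamma>. s \<gamma> = x}) \<le> N1"
    using compact_fibers_card_bounded[OF s_locally_injective assms] by blast
  moreover obtain N2 where "\<forall>x. finite (C \<inter> {\<gamma>. r \<gamma> = x}) \<and> card (C \<inter> {\<gamma>. r \<gamma> = x}) \<le> N2"
    using compact_fibers_card_bounded[OF r_locally_injective assms] by blast
  ultimately have "bounded_fibers C (max N1 N2)"
    unfolding bounded_fibers_def by (meson le_trans max.cobounded1 max.cobounded2)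
  then show ?thesis by (rule that)
qed

end

section \<open>Continuous sections\<close>

lemma compact_closure_subset:
  assumes "A \<subseteq> B" "compact (closure B)"
  shows "compact (closure A)"
proof -
  have "closure A = closure B \<inter> closure A" using closure_mono[OF assms(1)] by blast
  moreover have "compact (closure B \<inter> closure A)" by (rule compact_Int_closed[OF assms(2) closed_closure])
  ultimately show ?thesis by simp
qed

lemma continuous_bounded_on_compact:
  fixes \<phi> :: "'a::topological_space \<Rightarrow> real"
  assumes "compact K" "continuous_on UNIV \<phi>"
  obtains B where "0 \<le> B" "\<And>\<gamma>. \<gamma> \<in> K \<Longrightarrow> \<bar>\<phi> \<gamma>\<bar> \<le> B"
proof -
  have "compact (\<phi> ` K)"
    by (rule compact_continuous_image[OF continuous_on_subset[OF assms(2)] assms(1)]) auto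
  then obtain a where "\<forall>y\<in>\<phi> ` K. \<bar>y\<bar> \<le> a" using compact_imp_bounded bounded_real by blast
  then show ?thesis using that[of "max a 0"] by fastforce
qed

lemma Cc_secD:
  assumes "Cc_sec r mS p iota h"
  shows "is_section r mS p iota h" "continuous_on UNIV h" "compact (closure (p ` {\<sigma>. h \<sigma> \<noteq> 0}))"
  using assms unfolding Cc_sec_def by auto

lemma norm_2pL_le:
  assumes "\<And>x F. x \<in> G0 \<Longrightarrow> finite F \<Longrightarrow> F \<subseteq> {\<gamma>. s \<gamma> = x} \<or> F \<subseteq> {\<gamma>. r \<gamma> = x} \<Longrightarrow>
            (\<Sum>\<gamma>\<in>F. (cmod (f (lift p \<gamma>) * complex_of_real ((1 + L \<gamma>) ^ k)))\<^sup>2) \<le> B\<^sup>2"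
    and B: "0 \<le> B"
  shows "norm_2pL G0 r s p L k f \<le> ereal B"
proof -
  have *: "l2n A (\<lambda>\<gamma>. f (lift p \<gamma>) * complex_of_real ((1 + L \<gamma>) ^ k)) \<le> ereal B"
    if "\<And>F. finite F \<Longrightarrow> F \<subseteq> A \<Longrightarrow> (\<Sum>\<gamma>\<in>F. (cmod (f (lift p \<gamma>) * complex_of_real ((1 + L \<gamma>) ^ k)))\<^sup>2) \<le> B\<^sup>2"
    for A
    unfolding l2n_def
  proof (rule SUP_least)
    fix F assume "F \<in> {F. finite F \<and> F \<subseteq> A}"
    then have "(\<Sum>\<gamma>\<in>F. (cmod (f (lift p \<gamma>) * complex_of_real ((1 + L \<gamma>) ^ k)))\<^sup>2) \<le> B\<^sup>2" using that by auto
    then have "sqrt (\<Sum>\<gamma>\<in>F. (cmod (f (lift p \<gamma>) * complex_of_real ((1 + L \<gamma>) ^ k)))\<^sup>2) \<le> B"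
      by (rule real_le_lsqrt[OF B])
    then show "ereal (sqrt (\<Sum>\<gamma>\<in>F. (cmod (f (lift p \<gamma>) * complex_of_real ((1 + L \<gamma>) ^ k)))\<^sup>2)) \<le> ereal B" by simp
  qed
  show ?thesis unfolding norm_2pL_def
    by (intro max.boundedI SUP_least *; blast intro: assms(1))
qed

context twisted_groupoid
begin

lemma is_section_diff:
  "is_section r mS p iota a \<Longrightarrow> is_section r mS p iota b \<Longrightarrow> is_section r mS p iota (\<lambda>\<sigma>. a \<sigma> - b \<sigma>)"
  unfolding is_section_def by (simp add: right_diff_distrib)

lemma is_section_mult:
  assumes "is_section r mS p iota h"
    and "\<And>\<sigma> z. z \<in> sphere 0 1 \<Longrightarrow> w (mS (iota z (r (p \<sigma>))) \<sigma>) = w \<sigma>"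
  shows "is_section r mS p iota (\<lambda>\<sigma>. w \<sigma> * h \<sigma>)"
  using assms unfolding is_section_def by (simp add: mult.left_commute)

lemma section_norm_circle_action:
  "is_section r mS p iota h \<Longrightarrow> z \<in> sphere 0 1 \<Longrightarrow> cmod (h (mS (iota z (r (p \<sigma>))) \<sigma>)) = cmod (h \<sigma>)"
  unfolding is_section_def by (simp add: norm_mult)

text \<open>Although \<open>lift p\<close> is not continuous, \<open>|h \<circ> lift p|\<close> is: locally it agrees with
  \<open>|h \<circ> S|\<close> for a continuous local section \<open>S\<close> of \<open>p\<close>.\<close>
lemma continuous_norm_section_lift:
  assumes h: "is_section r mS p iota h" and hc: "continuous_on UNIV h"
  shows "continuous_on UNIV (\<lambda>\<gamma>. cmod (h (lift p \<gamma>)))"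
proof (rule continuous_at_imp_continuous_on, intro ballI)
  fix \<gamma> :: 'g
  obtain V S where V: "open V" "\<gamma> \<in> V" "continuous_on V S" "\<forall>g\<in>V. p (S g) = g"
    using local_trivialization[of \<gamma>] by blast
  have "continuous_on V (\<lambda>g. cmod (h (S g)))"
    by (intro continuous_on_norm continuous_on_compose2[OF hc V(3)]) auto
  moreover have "cmod (h (S g)) = cmod (h (lift p g))" if "g \<in> V" for g
    using section_norm_eq[OF h] V(4) that by simp
  ultimately have "continuous_on V (\<lambda>g. cmod (h (lift p g)))"
    using continuous_on_cong by fastforce
  then show "isCont (\<lambda>\<gamma>. cmod (h (lift p \<gamma>))) \<gamma>"
    using continuous_on_eq_continuous_at[OF V(1)] V(2) by blast
qed

lemma Cr_sec_approx:
  assumes "Cr_sec G0 r s mS iS p iota f" "0 < \<delta>"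
  obtains h where "Cc_sec r mS p iota h" "red_norm (\<lambda>\<sigma>. f \<sigma> - h \<sigma>) \<le> ereal \<delta>"
proof -
  obtain fn where fn: "\<And>n. Cc_sec r mS p iota (fn n)"
    and lim: "((\<lambda>n. red_norm (\<lambda>\<sigma>. f \<sigma> - fn n \<sigma>)) \<longlongrightarrow> 0) sequentially"
    using assms(1) unfolding Cr_sec_def by blast
  have "\<forall>\<^sub>F n in sequentially. red_norm (\<lambda>\<sigma>. f \<sigma> - fn n \<sigma>) < ereal \<delta>"
    using order_tendstoD(2)[OF lim] assms(2) by (simp add: zero_ereal_def)
  then obtain n where "red_norm (\<lambda>\<sigma>. f \<sigma> - fn n \<sigma>) < ereal \<delta>"
    using eventually_sequentially by auto
  then show ?thesis using that[OF fn[of n]] by simp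
qed

lemma Cr_sec_continuous:
  assumes "Cr_sec G0 r s mS iS p iota f"
  shows "continuous_on UNIV f"
proof -
  obtain fn where fn: "\<And>n. Cc_sec r mS p iota (fn n)"
    and lim: "((\<lambda>n. red_norm (\<lambda>\<sigma>. f \<sigma> - fn n \<sigma>)) \<longlongrightarrow> 0) sequentially"
    and f: "is_section r mS p iota f"
    using assms unfolding Cr_sec_def by blast
  have "uniform_limit UNIV fn f sequentially"
    unfolding uniform_limit_iff
  proof (intro allI impI)
    fix e :: real assume e: "0 < e"
    have "\<forall>\<^sub>F n in sequentially. red_norm (\<lambda>\<sigma>. f \<sigma> - fn n \<sigma>) < ereal (e / 2)"
      using order_tendstoD(2)[OF lim] e by (simp add: zero_ereal_def)
    then show "\<forall>\<^sub>F n in sequentially. \<forall>\<sigma>\<in>UNIV. dist (fn n \<sigma>) (f \<sigma>) < e"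
    proof (rule eventually_mono, intro ballI)
      fix n \<sigma> assume n: "red_norm (\<lambda>\<sigma>. f \<sigma> - fn n \<sigma>) < ereal (e / 2)"
      have "is_section r mS p iota (\<lambda>\<sigma>. f \<sigma> - fn n \<sigma>)"
        using f Cc_secD(1)[OF fn] by (rule is_section_diff)
      then have "cmod (f \<sigma> - fn n \<sigma>) \<le> e / 2" by (rule norm_le_red_norm) (use n in simp)
      then show "dist (fn n \<sigma>) (f \<sigma>) < e" using e by (simp add: dist_norm norm_minus_commute)
    qed
  qed
  then show ?thesis using Cc_secD(2)[OF fn] by (intro uniform_limit_theorem) auto
qed


lemma Cc_sec_mult:
  assumes h: "Cc_sec r mS p iota h" and w: "continuous_on UNIV w"
    and inv: "\<And>\<sigma> z. z \<in> sphere 0 1 \<Longrightarrow> w (mS (iota z (r (p \<sigma>))) \<sigma>) = w \<sigma>"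
  shows "Cc_sec r mS p iota (\<lambda>\<sigma>. w \<sigma> * h \<sigma>)"
  unfolding Cc_sec_def
proof (intro conjI)
  show "is_section r mS p iota (\<lambda>\<sigma>. w \<sigma> * h \<sigma>)" by (rule is_section_mult[OF Cc_secD(1)[OF h] inv])
  show "continuous_on UNIV (\<lambda>\<sigma>. w \<sigma> * h \<sigma>)"
    using Cc_secD(2)[OF h] w by (intro continuous_intros) auto
  show "compact (closure (p ` {\<sigma>. w \<sigma> * h \<sigma> \<noteq> 0}))"
    by (rule compact_closure_subset[OF _ Cc_secD(3)[OF h]]) auto
qed

lemma lift_in_support: "h (lift p \<gamma>) \<noteq> 0 \<Longrightarrow> \<gamma> \<in> p ` {\<sigma>. h \<sigma> \<noteq> 0}"
  by (metis (mono_tags, lifting) image_eqI mem_Collect_eq p_lift)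

lemma lift_in_closure_support: "h (lift p \<gamma>) \<noteq> 0 \<Longrightarrow> \<gamma> \<in> closure (p ` {\<sigma>. h \<sigma> \<noteq> 0})"
  using lift_in_support closure_subset by blast

lemma norm_2pL_le_of_support:
  assumes N: "bounded_fibers K N"
    and supp: "\<And>\<gamma>. h (lift p \<gamma>) \<noteq> 0 \<Longrightarrow> \<gamma> \<in> K"
    and bound: "\<And>\<gamma>. \<gamma> \<in> K \<Longrightarrow> cmod (h (lift p \<gamma>) * complex_of_real ((1 + L \<gamma>) ^ k)) \<le> B"
    and B: "0 \<le> B"
  shows "norm_2pL G0 r s p L k h \<le> ereal (sqrt (real N) * B)"
proof -
  have *: "(\<Sum>\<gamma>\<in>F. (cmod (h (lift p \<gamma>) * complex_of_real ((1 + L \<gamma>) ^ k)))\<^sup>2) \<le> (sqrt (real N) * B)\<^sup>2"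
    if F: "finite F" "F \<subseteq> {\<gamma>. q \<gamma> = x}"
      and Nq: "finite (K \<inter> {\<gamma>. q \<gamma> = x})" "card (K \<inter> {\<gamma>. q \<gamma> = x}) \<le> N"
    for F x and q :: "'g \<Rightarrow> 'g"
  proof -
    have "F \<inter> K \<subseteq> K \<inter> {\<gamma>. q \<gamma> = x}" using F by auto
    then have "card (F \<inter> K) \<le> N" using Nq card_mono order_trans by blast
    have "(\<Sum>\<gamma>\<in>F. (cmod (h (lift p \<gamma>) * complex_of_real ((1 + L \<gamma>) ^ k)))\<^sup>2)
        = (\<Sum>\<gamma>\<in>F \<inter> K. (cmod (h (lift p \<gamma>) * complex_of_real ((1 + L \<gamma>) ^ k)))\<^sup>2)"
      using F(1) supp by (intro sum.mono_neutral_right) auto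
    also have "\<dots> \<le> real (card (F \<inter> K)) * B\<^sup>2"
      using sum_mono[of "F \<inter> K" _ "\<lambda>_. B\<^sup>2"] bound B by (simp add: power_mono)
    also have "\<dots> \<le> real N * B\<^sup>2" using \<open>card (F \<inter> K) \<le> N\<close> by (intro mult_right_mono) auto
    finally show ?thesis by (simp add: power_mult_distrib)
  qed
  show ?thesis
    by (rule norm_2pL_le) (use * N B in \<open>auto simp: bounded_fibers_def\<close>)
qed

end

section \<open>Approximation estimates\<close>

lemma power_le_exp: assumes "0 \<le> x" shows "x ^ k \<le> real k ^ k * exp x"
proof (cases "k = 0")
  case True then show ?thesis using assms by simp
next
  case False
  have "(1 + x / real k) ^ k \<le> exp x"
    using False assms by (intro exp_ge_one_plus_x_over_n_power_n) auto
  moreover have "(x / real k) ^ k \<le> (1 + x / real k) ^ k"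
    using assms by (intro power_mono) auto
  ultimately have "(x / real k) ^ k \<le> exp x" by linarith
  then show ?thesis using False by (simp add: power_divide field_simps)
qed

lemma exp_neg_mult_poly_sqrt_bounded:
  assumes t: "0 < t"
  shows "\<exists>M. \<forall>u\<ge>0. exp (- t * u) * (1 + sqrt u) ^ k \<le> M"
proof (intro exI allI impI)
  fix u :: real assume u: "0 \<le> u"
  have "sqrt u \<le> 1 + u"
  proof (cases "u \<le> 1")
    case True then have "sqrt u \<le> 1" by simp
    then show ?thesis using u by linarith
  next
    case False then have "1 \<le> sqrt u" by simp
    then have "sqrt u * 1 \<le> sqrt u * sqrt u" by (intro mult_left_mono) auto
    then have "sqrt u \<le> u" using u by simp
    then show ?thesis by simp
  qed
  then have a: "(1 + sqrt u) ^ k \<le> (2 + u) ^ k" using u by (intro power_mono) auto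
  have "(t * (2 + u)) ^ k \<le> real k ^ k * exp (t * (2 + u))" using u t by (intro power_le_exp) auto
  then have "t ^ k * (2 + u) ^ k \<le> real k ^ k * exp (t * (2 + u))"
    by (simp only: power_mult_distrib)
  then have b: "(2 + u) ^ k \<le> real k ^ k * exp (t * (2 + u)) / t ^ k"
    using t by (simp add: pos_le_divide_eq mult.commute)
  have "exp (- t * u) * (1 + sqrt u) ^ k \<le> exp (- t * u) * (real k ^ k * exp (t * (2 + u)) / t ^ k)"
    using a b by (intro mult_left_mono) auto
  also have "\<dots> = real k ^ k * exp (2 * t) / t ^ k"
    by (simp add: exp_add[symmetric] algebra_simps)
  finally show "exp (- t * u) * (1 + sqrt u) ^ k \<le> real k ^ k * exp (2 * t) / t ^ k" .
qed

definition cutoff :: "real \<Rightarrow> real \<Rightarrow> real" where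
  "cutoff \<eta> x = min 1 (max 0 (x / \<eta> - 1))"

lemma cutoff_bounds: "0 \<le> cutoff \<eta> x" "cutoff \<eta> x \<le> 1"
  unfolding cutoff_def by auto

lemma cutoff_nonzero_imp_gt: "0 < \<eta> \<Longrightarrow> cutoff \<eta> x \<noteq> 0 \<Longrightarrow> \<eta> < x"
  unfolding cutoff_def by (auto simp: max_def min_def field_simps split: if_splits)

lemma one_minus_cutoff_mult_le:
  assumes "0 < \<eta>" "0 \<le> x"
  shows "(1 - cutoff \<eta> x) * x \<le> 2 * \<eta>"
proof (cases "x < 2 * \<eta>")
  case True
  then show ?thesis using mult_right_mono[of "1 - cutoff \<eta> x" 1 x] cutoff_bounds assms by auto
next
  case False
  then have "cutoff \<eta> x = 1" using assms unfolding cutoff_def by (simp add: field_simps)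
  then show ?thesis using assms by simp
qed

lemma continuous_on_cutoff: "continuous_on UNIV (cutoff \<eta>)"
  unfolding cutoff_def divide_inverse by (intro continuous_intros)

lemma norm_scaled_diff_le:
  fixes w :: real
  assumes "0 \<le> w" "w \<le> 1"
  shows "cmod (complex_of_real w * a - complex_of_real w * b) \<le> cmod (a - b)"
proof -
  have "cmod (complex_of_real w * a - complex_of_real w * b) = w * cmod (a - b)"
    using assms by (simp add: right_diff_distrib[symmetric] norm_mult del: of_real_mult)
  then show ?thesis using assms by (simp add: mult_left_le_one_le)
qed

context twisted_groupoid
begin

text \<open>A fixed test vector and finite window involve only finitely many entries of \<open>h\<close>, so a
  uniformly small perturbation of \<open>h\<close> changes the estimate arbitrarily little.\<close>
lemma red_norm_le_of_uniform_approx: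
  assumes "\<And>\<rho>. 0 < \<rho> \<Longrightarrow> \<exists>h'. red_norm h' \<le> ereal (A + \<rho>) \<and> (\<forall>\<sigma>. cmod (h \<sigma> - h' \<sigma>) \<le> \<rho>)"
  shows "red_norm h \<le> ereal A"
proof (rule red_norm_leI)
  fix x \<xi> F assume \<xi>: "test_vector x \<xi>" and F: "finite F" "F \<subseteq> {\<gamma>. s \<gamma> = x}"
  define C where "C = real (card {\<eta>. \<xi> \<eta> \<noteq> 0}) * sqrt (real (card F))"
  have C: "0 \<le> C" unfolding C_def by simp
  have "regrep_norm h \<xi> F \<le> A + e" if e: "0 < e" for e
  proof -
    define \<rho> where "\<rho> = e / (1 + C)"
    have \<rho>: "0 < \<rho>" "\<rho> * (1 + C) = e" using e C by (simp_all add: \<rho>_def)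
    obtain h' where h': "red_norm h' \<le> ereal (A + \<rho>)" "\<And>\<sigma>. cmod (h \<sigma> - h' \<sigma>) \<le> \<rho>"
      using assms[OF \<rho>(1)] by blast
    have "regrep_norm h \<xi> F = regrep_norm (\<lambda>\<sigma>. h' \<sigma> + (h \<sigma> - h' \<sigma>)) \<xi> F" by simp
    also have "\<dots> \<le> regrep_norm h' \<xi> F + regrep_norm (\<lambda>\<sigma>. h \<sigma> - h' \<sigma>) \<xi> F"
      by (rule regrep_norm_triangle)
    also have "\<dots> \<le> (A + \<rho>) + \<rho> * C"
      unfolding C_def mult.assoc[symmetric]
      by (intro add_mono regrep_norm_le[OF h'(1) \<xi> F] regrep_norm_le_sup[OF h'(2) \<xi> F(1)])
    finally show ?thesis using \<rho>(2) by (simp add: algebra_simps)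
  qed
  then show "ereal (regrep_norm h \<xi> F) \<le> ereal A" by (simp add: field_le_epsilon)
qed

lemma L2_set_le_of_bounded_fibers:
  assumes N: "bounded_fibers K N" and \<delta>: "red_norm (\<lambda>\<sigma>. f \<sigma> - g \<sigma>) \<le> ereal \<delta>"
    and sec: "is_section r mS p iota (\<lambda>\<sigma>. f \<sigma> - g \<sigma>)"
    and x: "x \<in> G0" and F: "finite F" "F \<subseteq> {\<gamma>. s \<gamma> = x} \<or> F \<subseteq> {\<gamma>. r \<gamma> = x}"
    and v: "\<And>\<gamma>. 0 \<le> v \<gamma>" "\<And>\<gamma>. \<gamma> \<in> K \<Longrightarrow> v \<gamma> \<le> b"
      "\<And>\<gamma>. \<gamma> \<notin> K \<Longrightarrow> v \<gamma> \<le> cmod (f (lift p \<gamma>) - g (lift p \<gamma>))"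
    and b: "0 \<le> b" and "0 \<le> \<delta>"
  shows "L2_set v F \<le> sqrt (real N) * b + \<delta>"
proof -
  have "card (F \<inter> K) \<le> N"
  proof -
    have "F \<inter> K \<subseteq> K \<inter> {\<gamma>. s \<gamma> = x} \<or> F \<inter> K \<subseteq> K \<inter> {\<gamma>. r \<gamma> = x}" using F(2) by auto
    then show ?thesis using N unfolding bounded_fibers_def by (meson card_mono le_trans)
  qed
  then have "(\<Sum>\<gamma>\<in>F \<inter> K. (v \<gamma>)\<^sup>2) \<le> (sqrt (real N) * b)\<^sup>2"
    using sum_mono[of "F \<inter> K" "\<lambda>\<gamma>. (v \<gamma>)\<^sup>2" "\<lambda>_. b\<^sup>2"] v(1,2) b
    by (auto simp: power_mult_distrib intro: power_mono order_trans[OF _ mult_right_mono])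
  moreover have "(\<Sum>\<gamma>\<in>F - K. (v \<gamma>)\<^sup>2) \<le> \<delta>\<^sup>2"
  proof -
    have "(\<Sum>\<gamma>\<in>F - K. (v \<gamma>)\<^sup>2) \<le> (\<Sum>\<gamma>\<in>F - K. (cmod (f (lift p \<gamma>) - g (lift p \<gamma>)))\<^sup>2)"
      using v(1,3) by (intro sum_mono power_mono) auto
    also have "\<dots> \<le> \<delta>\<^sup>2"
      using F by (intro fiber_sum_sq_le[OF sec \<delta> x]) auto
    finally show ?thesis .
  qed
  ultimately have "(\<Sum>\<gamma>\<in>F. (v \<gamma>)\<^sup>2) \<le> (sqrt (real N) * b)\<^sup>2 + \<delta>\<^sup>2"
    using F(1) by (simp add: sum.Int_Diff[of F _ K])
  then have "L2_set v F \<le> sqrt ((sqrt (real N) * b)\<^sup>2 + \<delta>\<^sup>2)"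
    unfolding L2_set_def by (rule real_sqrt_le_mono)
  also have "\<dots> \<le> sqrt (real N) * b + \<delta>"
    using b \<open>0 \<le> \<delta>\<close> by (intro sqrt_sum_squares_le_sum) auto
  finally show ?thesis .
qed

lemma L2_set_cutoff_tail_le:
  assumes f: "is_section r mS p iota f" and fm: "is_section r mS p iota fm"
    and ffm: "red_norm (\<lambda>\<sigma>. f \<sigma> - fm \<sigma>) \<le> ereal \<rho>"
    and \<eta>: "0 < \<eta>" and K: "bounded_fibers K N"
    and g: "is_section r mS p iota g" "red_norm (\<lambda>\<sigma>. f \<sigma> - g \<sigma>) \<le> ereal \<delta>"
      "\<And>\<gamma>. \<gamma> \<notin> K \<Longrightarrow> g (lift p \<gamma>) = 0"
    and "0 \<le> \<delta>" "0 \<le> \<rho>"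
    and x: "x \<in> G0" and F: "finite F" "F \<subseteq> {\<gamma>. s \<gamma> = x} \<or> F \<subseteq> {\<gamma>. r \<gamma> = x}"
  shows "L2_set (\<lambda>\<gamma>. (1 - cutoff \<eta> (cmod (f (lift p \<gamma>)))) * cmod (fm (lift p \<gamma>))) F
    \<le> sqrt (real N) * (2 * \<eta>) + \<delta> + \<rho>"
proof -
  define a where "a \<gamma> = 1 - cutoff \<eta> (cmod (f (lift p \<gamma>)))" for \<gamma>
  have a: "0 \<le> a \<gamma>" "a \<gamma> \<le> 1" for \<gamma> using cutoff_bounds by (auto simp: a_def)
  let ?v = "\<lambda>\<gamma>. a \<gamma> * cmod (f (lift p \<gamma>))"
  let ?w = "\<lambda>\<gamma>. cmod (f (lift p \<gamma>) - fm (lift p \<gamma>))"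
  have "a \<gamma> * cmod (fm (lift p \<gamma>)) \<le> ?v \<gamma> + ?w \<gamma>" for \<gamma>
  proof -
    have "a \<gamma> * cmod (fm (lift p \<gamma>)) \<le> a \<gamma> * (cmod (f (lift p \<gamma>)) + ?w \<gamma>)"
      using a[of \<gamma>] norm_triangle_ineq4[of "f (lift p \<gamma>)" "f (lift p \<gamma>) - fm (lift p \<gamma>)"]
      by (intro mult_left_mono) auto
    also have "\<dots> \<le> ?v \<gamma> + ?w \<gamma>"
      using a[of \<gamma>] by (simp add: distrib_left mult_left_le_one_le)
    finally show ?thesis .
  qed
  then have "L2_set (\<lambda>\<gamma>. a \<gamma> * cmod (fm (lift p \<gamma>))) F \<le> L2_set (\<lambda>\<gamma>. ?v \<gamma> + ?w \<gamma>) F"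
    using a by (intro L2_set_mono) auto
  also have "\<dots> \<le> L2_set ?v F + L2_set ?w F" by (rule L2_set_triangle_ineq)
  also have "L2_set ?v F \<le> sqrt (real N) * (2 * \<eta>) + \<delta>"
  proof (rule L2_set_le_of_bounded_fibers[OF K g(2) is_section_diff[OF f g(1)] x F])
    show "?v \<gamma> \<le> 2 * \<eta>" for \<gamma> using one_minus_cutoff_mult_le[OF \<eta>] by (simp add: a_def)
    show "?v \<gamma> \<le> cmod (f (lift p \<gamma>) - g (lift p \<gamma>))" if "\<gamma> \<notin> K" for \<gamma>
      using g(3)[OF that] a[of \<gamma>] by (simp add: mult_left_le_one_le)
  qed (use a \<eta> \<open>0 \<le> \<delta>\<close> in auto)
  also have "L2_set ?w F \<le> \<rho>"
    using fiber_sum_sq_le[OF is_section_diff[OF f fm] ffm x F] \<open>0 \<le> \<rho>\<close>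
    unfolding L2_set_def by (intro real_le_lsqrt) auto
  finally show ?thesis by (simp add: a_def)
qed

end

locale rapid_decay_twist = twisted_groupoid G0 r s i m S0 rS sS iS mS p iota + N: negative_type G0 r s m i \<psi>
  for G0 :: "'g::t2_space set" and r s i m and S0 :: "'s::topological_space set" and rS sS iS mS p iota
    and \<psi> :: "'g \<Rightarrow> real" +
  fixes c :: real and k :: nat
  assumes c_pos: "0 < c"
    and rapid_decay_bound:
      "\<And>h. Cc_sec r mS p iota h \<Longrightarrow> red_norm h \<le> ereal c * norm_2pL G0 r s p (\<lambda>g. sqrt (\<psi> g)) k h"
begin

abbreviation weighted_norm :: "('s \<Rightarrow> complex) \<Rightarrow> ereal" where
  "weighted_norm h \<equiv> norm_2pL G0 r s p (\<lambda>g. sqrt (\<psi> g)) k h"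

abbreviation exp_weight :: "real \<Rightarrow> 's \<Rightarrow> real" where
  "exp_weight t \<sigma> \<equiv> exp (- t * \<psi> (p \<sigma>))"

lemma continuous_on_psi_p: "continuous_on UNIV (\<lambda>\<sigma>. \<psi> (p \<sigma>))"
  by (rule continuous_on_compose2[OF N.psi_continuous p_continuous]) auto

lemma red_norm_exp_weight_le:
  "0 \<le> t \<Longrightarrow> red_norm (\<lambda>\<sigma>. complex_of_real (exp_weight t \<sigma>) * h \<sigma>) \<le> red_norm h"
  by (rule red_norm_positive_definite_mult_le[OF N.positive_definite_exp_neg_psi])
    (simp_all add: N.psi_inv N.psi_unit)

lemma red_norm_one_minus_exp_weight_le:
  assumes g: "Cc_sec r mS p iota g"
  obtains X where "0 \<le> X"
    "\<And>t. 0 \<le> t \<Longrightarrow> red_norm (\<lambda>\<sigma>. complex_of_real (1 - exp_weight t \<sigma>) * g \<sigma>) \<le> ereal (t * X)"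
proof -
  define K where "K = closure (p ` {\<sigma>. g \<sigma> \<noteq> 0})"
  have K: "compact K" unfolding K_def by (rule Cc_secD(3)[OF g])
  obtain N where N: "bounded_fibers K N" using compact_bounded_fibers[OF K] .
  obtain B where B: "0 \<le> B" "\<And>\<gamma>. \<gamma> \<in> K \<Longrightarrow> \<bar>cmod (g (lift p \<gamma>))\<bar> \<le> B"
    using continuous_bounded_on_compact[OF K continuous_norm_section_lift[OF Cc_secD(1,2)[OF g]]] by blast
  obtain T where T: "0 \<le> T" "\<And>\<gamma>. \<gamma> \<in> K \<Longrightarrow> \<bar>\<psi> \<gamma>\<bar> \<le> T"
    using continuous_bounded_on_compact[OF K N.psi_continuous] by blast
  have "continuous_on UNIV (\<lambda>\<gamma>. (1 + sqrt (\<psi> \<gamma>)) ^ k)"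
    by (intro continuous_intros continuous_on_compose2[OF continuous_on_real_sqrt N.psi_continuous]) auto
  then obtain W where W: "0 \<le> W" "\<And>\<gamma>. \<gamma> \<in> K \<Longrightarrow> \<bar>(1 + sqrt (\<psi> \<gamma>)) ^ k\<bar> \<le> W"
    using continuous_bounded_on_compact[OF K] by blast
  show ?thesis
  proof (rule that[of "c * sqrt (real N) * (T * B * W)"])
    show "0 \<le> c * sqrt (real N) * (T * B * W)" using c_pos B T W by simp
    fix t :: real assume t: "0 \<le> t"
    define h where "h \<sigma> = complex_of_real (1 - exp_weight t \<sigma>) * g \<sigma>" for \<sigma>
    have "Cc_sec r mS p iota h"
      unfolding h_def by (rule Cc_sec_mult[OF g]) (auto intro!: continuous_intros continuous_on_psi_p)
    note rd = rapid_decay_bound[OF this]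
    have "weighted_norm h \<le> ereal (sqrt (real N) * (t * T * B * W))"
    proof (rule norm_2pL_le_of_support[OF N])
      show "h (lift p \<gamma>) \<noteq> 0 \<Longrightarrow> \<gamma> \<in> K" for \<gamma>
        unfolding h_def K_def by (auto intro: lift_in_closure_support)
      fix \<gamma> assume "\<gamma> \<in> K"
      have "\<bar>1 - exp (- (t * \<psi> \<gamma>))\<bar> \<le> t * \<psi> \<gamma>"
        using exp_ge_add_one_self[of "- (t * \<psi> \<gamma>)"] t N.psi_nonneg[of \<gamma>] by simp
      also have "\<dots> \<le> t * T" using T(2)[OF \<open>\<gamma> \<in> K\<close>] t by (intro mult_left_mono) auto
      finally show "cmod (h (lift p \<gamma>) * complex_of_real ((1 + sqrt (\<psi> \<gamma>)) ^ k)) \<le> t * T * B * W"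
        unfolding h_def norm_mult norm_of_real using B W \<open>\<gamma> \<in> K\<close>
        by (simp add: mult_mono' mult_nonneg_nonneg del: of_real_power)
    qed (use t T B W in simp)
    then have "ereal c * weighted_norm h \<le> ereal c * ereal (sqrt (real N) * (t * T * B * W))"
      using c_pos by (intro ereal_mult_left_mono) auto
    then show "red_norm h \<le> ereal (t * (c * sqrt (real N) * (T * B * W)))"
      using rd by (simp add: mult_ac)
  qed
qed

lemma red_norm_exp_weight_approx:
  assumes f: "Cr_sec G0 r s mS iS p iota f" and \<delta>: "0 < \<delta>"
  obtains t where "0 < t" "red_norm (\<lambda>\<sigma>. f \<sigma> - complex_of_real (exp_weight t \<sigma>) * f \<sigma>) \<le> ereal (3 * \<delta>)"
proof -
  obtain g where g: "Cc_sec r mS p iota g" and fg: "red_norm (\<lambda>\<sigma>. f \<sigma> - g \<sigma>) \<le> ereal \<delta>"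
    using Cr_sec_approx[OF f \<delta>] .
  obtain X where X: "0 \<le> X"
    "\<And>t. 0 \<le> t \<Longrightarrow> red_norm (\<lambda>\<sigma>. complex_of_real (1 - exp_weight t \<sigma>) * g \<sigma>) \<le> ereal (t * X)"
    using red_norm_one_minus_exp_weight_le[OF g] by blast
  define t where "t = \<delta> / (X + 1)"
  have t: "0 < t" "t * X \<le> \<delta>" using \<delta> X(1) by (auto simp: t_def field_simps)
  let ?w = "\<lambda>\<sigma>. complex_of_real (exp_weight t \<sigma>)"
  have contracted: "red_norm (\<lambda>\<sigma>. ?w \<sigma> * (g \<sigma> - f \<sigma>)) \<le> ereal \<delta>"
    using red_norm_exp_weight_le[of t "\<lambda>\<sigma>. g \<sigma> - f \<sigma>"] t(1) red_norm_minus_commute[of g f] fg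
    by simp
  have "red_norm (\<lambda>\<sigma>. f \<sigma> - ?w \<sigma> * f \<sigma>)
      = red_norm (\<lambda>\<sigma>. (f \<sigma> - g \<sigma>) + (?w \<sigma> * (g \<sigma> - f \<sigma>) + complex_of_real (1 - exp_weight t \<sigma>) * g \<sigma>))"
    by (simp add: algebra_simps)
  also have "\<dots> \<le> red_norm (\<lambda>\<sigma>. f \<sigma> - g \<sigma>) + (red_norm (\<lambda>\<sigma>. ?w \<sigma> * (g \<sigma> - f \<sigma>)) +
      red_norm (\<lambda>\<sigma>. complex_of_real (1 - exp_weight t \<sigma>) * g \<sigma>))"
    by (intro order_trans[OF red_norm_triangle] add_left_mono red_norm_triangle)
  also have "\<dots> \<le> ereal \<delta> + (ereal \<delta> + ereal \<delta>)"
    using X(2)[of t] t by (intro add_mono fg contracted) (auto intro: order_trans)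
  finally show ?thesis using that t(1) by simp
qed

lemma weighted_norm_tail_le:
  assumes f: "is_section r mS p iota f" and fm: "is_section r mS p iota fm"
    and ffm: "red_norm (\<lambda>\<sigma>. f \<sigma> - fm \<sigma>) \<le> ereal \<rho>"
    and M: "\<And>u. 0 \<le> u \<Longrightarrow> exp (- t * u) * (1 + sqrt u) ^ k \<le> M"
    and \<eta>: "0 < \<eta>" and K: "bounded_fibers K N"
    and g: "is_section r mS p iota g" "red_norm (\<lambda>\<sigma>. f \<sigma> - g \<sigma>) \<le> ereal \<delta>"
      "\<And>\<gamma>. \<gamma> \<notin> K \<Longrightarrow> g (lift p \<gamma>) = 0"
    and "0 \<le> \<delta>" "0 \<le> \<rho>"
  shows "weighted_norm (\<lambda>\<sigma>. complex_of_real (exp_weight t \<sigma> * (1 - cutoff \<eta> (cmod (f \<sigma>)))) * fm \<sigma>)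
    \<le> ereal (M * (sqrt (real N) * (2 * \<eta>) + \<delta> + \<rho>))"
proof (rule norm_2pL_le, goal_cases)
  case (1 x F)
  define a where "a \<gamma> = 1 - cutoff \<eta> (cmod (f (lift p \<gamma>)))" for \<gamma>
  define u where "u \<gamma> = a \<gamma> * cmod (fm (lift p \<gamma>))" for \<gamma>
  have a: "0 \<le> a \<gamma>" for \<gamma> using cutoff_bounds by (simp add: a_def)
  then have u: "0 \<le> u \<gamma>" for \<gamma> by (simp add: u_def)
  have "cmod (complex_of_real (exp_weight t (lift p \<gamma>) * (1 - cutoff \<eta> (cmod (f (lift p \<gamma>))))) *
      fm (lift p \<gamma>) * complex_of_real ((1 + sqrt (\<psi> \<gamma>)) ^ k))
      = (exp (- t * \<psi> \<gamma>) * (1 + sqrt (\<psi> \<gamma>)) ^ k) * u \<gamma>" for \<gamma>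
    unfolding a_def[symmetric] using a[of \<gamma>] N.psi_nonneg[of \<gamma>]
    by (simp add: u_def norm_mult abs_mult mult_ac del: of_real_power)
  also have "\<dots> \<gamma> \<le> M * u \<gamma>" for \<gamma>
    using M[OF N.psi_nonneg] u by (intro mult_right_mono) auto
  finally have pointwise: "cmod (complex_of_real (exp_weight t (lift p \<gamma>) *
      (1 - cutoff \<eta> (cmod (f (lift p \<gamma>))))) * fm (lift p \<gamma>) * complex_of_real ((1 + sqrt (\<psi> \<gamma>)) ^ k))
      \<le> M * u \<gamma>" for \<gamma> .
  have M1: "1 \<le> M" using M[of 0] by simp
  have "(\<Sum>\<gamma>\<in>F. (M * u \<gamma>)\<^sup>2) = (M * L2_set u F)\<^sup>2"
    unfolding L2_set_def using u by (simp add: power_mult_distrib sum_distrib_left[symmetric] sum_nonneg)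
  also have "\<dots> \<le> (M * (sqrt (real N) * (2 * \<eta>) + \<delta> + \<rho>))\<^sup>2"
    using L2_set_cutoff_tail_le[OF f fm ffm \<eta> K g \<open>0 \<le> \<delta>\<close> \<open>0 \<le> \<rho>\<close> 1] M1
    unfolding u_def a_def by (intro power_mono mult_left_mono) auto
  finally have bound: "(\<Sum>\<gamma>\<in>F. (M * u \<gamma>)\<^sup>2) \<le> (M * (sqrt (real N) * (2 * \<eta>) + \<delta> + \<rho>))\<^sup>2" .
  show ?case
    by (rule order_trans[OF sum_mono bound]) (intro power_mono pointwise norm_ge_zero)
next
  case 2
  show ?case using M[of 0] \<eta> \<open>0 \<le> \<delta>\<close> \<open>0 \<le> \<rho>\<close> by simp
qed

text \<open>Approximate \<open>f\<close> uniformly by \<open>C\<^sub>c\<close> sections \<open>fm\<close>, to which rapid decay applies.\<close>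
lemma red_norm_tail_le:
  assumes f: "Cr_sec G0 r s mS iS p iota f"
    and M: "\<And>u. 0 \<le> u \<Longrightarrow> exp (- t * u) * (1 + sqrt u) ^ k \<le> M" and t: "0 \<le> t" and \<eta>: "0 < \<eta>"
    and g: "Cc_sec r mS p iota g" "red_norm (\<lambda>\<sigma>. f \<sigma> - g \<sigma>) \<le> ereal \<delta>"
    and N: "bounded_fibers (closure (p ` {\<sigma>. g \<sigma> \<noteq> 0})) N" and "0 \<le> \<delta>"
  shows "red_norm (\<lambda>\<sigma>. complex_of_real (exp_weight t \<sigma> * (1 - cutoff \<eta> (cmod (f \<sigma>)))) * f \<sigma>)
    \<le> ereal (c * M * (sqrt (real N) * (2 * \<eta>) + \<delta>))"
proof (rule red_norm_le_of_uniform_approx)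
  fix \<rho> :: real assume \<rho>: "0 < \<rho>"
  let ?w = "\<lambda>\<sigma>. exp_weight t \<sigma> * (1 - cutoff \<eta> (cmod (f \<sigma>)))"
  have fs: "is_section r mS p iota f" using f unfolding Cr_sec_def by blast
  have M1: "1 \<le> M" using M[of 0] by simp
  define \<rho>' where "\<rho>' = \<rho> / (c * M + 1)"
  have "0 < c * M" using c_pos M1 by simp
  then have \<rho>': "0 < \<rho>'" "\<rho>' \<le> \<rho>" "c * M * \<rho>' \<le> \<rho>"
    using \<rho> by (auto simp: \<rho>'_def divide_le_eq)
  obtain fm where fm: "Cc_sec r mS p iota fm" "red_norm (\<lambda>\<sigma>. f \<sigma> - fm \<sigma>) \<le> ereal \<rho>'"
    using Cr_sec_approx[OF f \<rho>'(1)] .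
  have w: "0 \<le> ?w \<sigma>" "?w \<sigma> \<le> 1" for \<sigma>
    using cutoff_bounds[of \<eta> "cmod (f \<sigma>)"] t N.psi_nonneg[of "p \<sigma>"] by (auto intro: mult_le_one)
  have "Cc_sec r mS p iota (\<lambda>\<sigma>. complex_of_real (?w \<sigma>) * fm \<sigma>)"
    using Cr_sec_continuous[OF f] section_norm_circle_action[OF fs]
    by (intro Cc_sec_mult[OF fm(1)] continuous_intros continuous_on_psi_p
        continuous_on_compose2[OF continuous_on_cutoff]) auto
  then have "red_norm (\<lambda>\<sigma>. complex_of_real (?w \<sigma>) * fm \<sigma>)
      \<le> ereal c * weighted_norm (\<lambda>\<sigma>. complex_of_real (?w \<sigma>) * fm \<sigma>)"
    by (rule rapid_decay_bound)
  also have "\<dots> \<le> ereal c * ereal (M * (sqrt (real N) * (2 * \<eta>) + \<delta> + \<rho>'))"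
    using c_pos \<rho>'(1) \<open>0 \<le> \<delta>\<close> lift_in_closure_support[of g]
    by (intro ereal_mult_left_mono weighted_norm_tail_le[OF fs Cc_secD(1)[OF fm(1)] fm(2) M \<eta> N
          Cc_secD(1)[OF g(1)] g(2)]) auto
  also have "\<dots> \<le> ereal (c * M * (sqrt (real N) * (2 * \<eta>) + \<delta>) + \<rho>)"
    using \<rho>'(3) by (simp add: algebra_simps)
  finally have "red_norm (\<lambda>\<sigma>. complex_of_real (?w \<sigma>) * fm \<sigma>) \<le> ereal (c * M * (sqrt (real N) * (2 * \<eta>) + \<delta>) + \<rho>)" .
  moreover have "cmod (complex_of_real (?w \<sigma>) * f \<sigma> - complex_of_real (?w \<sigma>) * fm \<sigma>) \<le> \<rho>" for \<sigma>
    using norm_le_red_norm[OF is_section_diff[OF fs Cc_secD(1)[OF fm(1)]] fm(2), of \<sigma>] \<rho>'(2)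
    by (intro order_trans[OF norm_scaled_diff_le[OF w]]) simp
  ultimately show "\<exists>h'. red_norm h' \<le> ereal (c * M * (sqrt (real N) * (2 * \<eta>) + \<delta>) + \<rho>) \<and>
      (\<forall>\<sigma>. cmod (complex_of_real (?w \<sigma>) * f \<sigma> - h' \<sigma>) \<le> \<rho>)"
    by blast
qed

text \<open>The support of the cut-off section lies in the closed set \<open>{|f| \<ge> \<eta>}\<close>, which lies inside the
  support of any \<open>C\<^sub>c\<close> section uniformly \<open>\<eta>/2\<close>-close to \<open>f\<close>.\<close>
lemma exp_weight_cutoff_Cc_sec:
  fixes t :: real
  assumes f: "Cr_sec G0 r s mS iS p iota f" and \<eta>: "0 < \<eta>"
  defines "g \<equiv> \<lambda>\<sigma>. complex_of_real (exp_weight t \<sigma> * cutoff \<eta> (cmod (f \<sigma>))) * f \<sigma>"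
  shows "Cc_sec r mS p iota g" "closure (p ` {\<sigma>. g \<sigma> \<noteq> 0}) \<subseteq> p ` {\<sigma>. f \<sigma> \<noteq> 0}"
proof -
  have fs: "is_section r mS p iota f" using f unfolding Cr_sec_def by blast
  define Z where "Z = {\<gamma>. \<eta> \<le> cmod (f (lift p \<gamma>))}"
  have "closed Z" unfolding Z_def
    by (intro closed_Collect_le continuous_on_const continuous_norm_section_lift[OF fs Cr_sec_continuous[OF f]])
  have gZ: "p ` {\<sigma>. g \<sigma> \<noteq> 0} \<subseteq> Z"
  proof
    fix \<gamma> assume "\<gamma> \<in> p ` {\<sigma>. g \<sigma> \<noteq> 0}"
    then obtain \<sigma> where "\<gamma> = p \<sigma>" "cutoff \<eta> (cmod (f \<sigma>)) \<noteq> 0" unfolding g_def by auto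
    then show "\<gamma> \<in> Z" unfolding Z_def using cutoff_nonzero_imp_gt[OF \<eta>] section_norm_lift[OF fs, of \<sigma>] by force
  qed
  have Zf: "Z \<subseteq> p ` {\<sigma>. f \<sigma> \<noteq> 0}"
    unfolding Z_def using \<eta> by (auto intro: lift_in_support)
  show "closure (p ` {\<sigma>. g \<sigma> \<noteq> 0}) \<subseteq> p ` {\<sigma>. f \<sigma> \<noteq> 0}"
    using closure_minimal[OF gZ \<open>closed Z\<close>] Zf by blast
  obtain g' where g': "Cc_sec r mS p iota g'" "red_norm (\<lambda>\<sigma>. f \<sigma> - g' \<sigma>) \<le> ereal (\<eta> / 2)"
    using Cr_sec_approx[OF f] \<eta> by (metis half_gt_zero)
  have "Z \<subseteq> p ` {\<sigma>. g' \<sigma> \<noteq> 0}"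
  proof
    fix \<gamma> assume "\<gamma> \<in> Z"
    moreover have "cmod (f (lift p \<gamma>) - g' (lift p \<gamma>)) \<le> \<eta> / 2"
      by (rule norm_le_red_norm[OF is_section_diff[OF fs Cc_secD(1)[OF g'(1)]] g'(2)])
    ultimately have "g' (lift p \<gamma>) \<noteq> 0" using \<eta> unfolding Z_def by auto
    then show "\<gamma> \<in> p ` {\<sigma>. g' \<sigma> \<noteq> 0}" by (rule lift_in_support)
  qed
  then have "compact (closure (p ` {\<sigma>. g \<sigma> \<noteq> 0}))"
    using gZ by (intro compact_closure_subset[OF _ Cc_secD(3)[OF g'(1)]]) blast
  moreover have "is_section r mS p iota g"
    unfolding g_def by (rule is_section_mult[OF fs]) (simp add: section_norm_circle_action[OF fs])
  moreover have "continuous_on UNIV g"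
    unfolding g_def using Cr_sec_continuous[OF f]
    by (intro continuous_intros continuous_on_psi_p continuous_on_compose2[OF continuous_on_cutoff]) auto
  ultimately show "Cc_sec r mS p iota g" unfolding Cc_sec_def by blast
qed

lemma red_norm_cutoff_approx:
  assumes f: "Cr_sec G0 r s mS iS p iota f" and t: "0 < t" and \<epsilon>: "0 < \<epsilon>"
  obtains \<eta> where "0 < \<eta>" "red_norm (\<lambda>\<sigma>. complex_of_real (exp_weight t \<sigma>) * f \<sigma> -
      complex_of_real (exp_weight t \<sigma> * cutoff \<eta> (cmod (f \<sigma>))) * f \<sigma>) \<le> ereal \<epsilon>"
proof -
  obtain M where M: "\<And>u. 0 \<le> u \<Longrightarrow> exp (- t * u) * (1 + sqrt u) ^ k \<le> M"
    using exp_neg_mult_poly_sqrt_bounded[OF t] by blast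
  have M0: "0 < M" using M[of 0] by simp
  then have cM: "0 < c * M" using c_pos by simp
  define \<delta> where "\<delta> = \<epsilon> / (2 * c * M)"
  have \<delta>: "0 < \<delta>" "c * M * \<delta> = \<epsilon> / 2" using \<epsilon> c_pos M0 by (simp_all add: \<delta>_def)
  obtain g where g: "Cc_sec r mS p iota g" "red_norm (\<lambda>\<sigma>. f \<sigma> - g \<sigma>) \<le> ereal \<delta>"
    using Cr_sec_approx[OF f \<delta>(1)] .
  obtain N where N: "bounded_fibers (closure (p ` {\<sigma>. g \<sigma> \<noteq> 0})) N"
    using compact_bounded_fibers[OF Cc_secD(3)[OF g(1)]] .
  define \<eta> where "\<eta> = \<epsilon> / (4 * c * M * (sqrt (real N) + 1))"
  have D: "0 < 4 * c * M * (sqrt (real N) + 1)"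
    using c_pos M0 by (intro mult_pos_pos) (auto simp: add_nonneg_pos)
  then have \<eta>: "0 < \<eta>" using \<epsilon> by (simp add: \<eta>_def)
  have "c * M * (sqrt (real N) * (2 * \<eta>)) \<le> c * M * ((sqrt (real N) + 1) * (2 * \<eta>))"
    using cM \<eta> by (intro mult_left_mono) auto
  also have "\<dots> = \<epsilon> / 2" using D by (simp add: \<eta>_def field_simps)
  finally have bound: "c * M * (sqrt (real N) * (2 * \<eta>) + \<delta>) \<le> \<epsilon>" using \<delta>(2) by (simp add: distrib_left)
  have tail: "red_norm (\<lambda>\<sigma>. complex_of_real (exp_weight t \<sigma> * (1 - cutoff \<eta> (cmod (f \<sigma>)))) * f \<sigma>)
      \<le> ereal (c * M * (sqrt (real N) * (2 * \<eta>) + \<delta>))"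
    using \<delta>(1) t by (intro red_norm_tail_le[OF f M _ \<eta> g N]) auto
  have eq: "(\<lambda>\<sigma>. complex_of_real (exp_weight t \<sigma>) * f \<sigma> -
      complex_of_real (exp_weight t \<sigma> * cutoff \<eta> (cmod (f \<sigma>))) * f \<sigma>) =
      (\<lambda>\<sigma>. complex_of_real (exp_weight t \<sigma> * (1 - cutoff \<eta> (cmod (f \<sigma>)))) * f \<sigma>)"
    by (simp add: algebra_simps)
  show ?thesis
    by (rule that[OF \<eta>]) (unfold eq, rule order_trans[OF tail], simp add: bound)
qed

lemma Cr_sec_approx_within_support:
  assumes f: "Cr_sec G0 r s mS iS p iota f" and \<epsilon>: "0 < \<epsilon>"
  shows "\<exists>g. Cc_sec r mS p iota g \<and> closure (p ` {\<sigma>. g \<sigma> \<noteq> 0}) \<subseteq> p ` {\<sigma>. f \<sigma> \<noteq> 0} \<and>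
    red_norm (\<lambda>\<sigma>. f \<sigma> - g \<sigma>) < ereal \<epsilon>"
proof -
  obtain t where t: "0 < t"
    and close: "red_norm (\<lambda>\<sigma>. f \<sigma> - complex_of_real (exp_weight t \<sigma>) * f \<sigma>) \<le> ereal (3 * (\<epsilon> / 8))"
    using red_norm_exp_weight_approx[OF f, of "\<epsilon> / 8"] \<epsilon> by auto
  obtain \<eta> where \<eta>: "0 < \<eta>"
    and cut: "red_norm (\<lambda>\<sigma>. complex_of_real (exp_weight t \<sigma>) * f \<sigma> -
      complex_of_real (exp_weight t \<sigma> * cutoff \<eta> (cmod (f \<sigma>))) * f \<sigma>) \<le> ereal (\<epsilon> / 4)"
    using red_norm_cutoff_approx[OF f t, of "\<epsilon> / 4"] \<epsilon> by auto
  let ?g = "\<lambda>\<sigma>. complex_of_real (exp_weight t \<sigma> * cutoff \<eta> (cmod (f \<sigma>))) * f \<sigma>"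
  have "red_norm (\<lambda>\<sigma>. f \<sigma> - ?g \<sigma>) \<le> ereal (3 * (\<epsilon> / 8)) + ereal (\<epsilon> / 4)"
    using order_trans[OF red_norm_triangle add_mono[OF close cut]] by simp
  also have "\<dots> < ereal \<epsilon>" using \<epsilon> by simp
  finally show ?thesis using exp_weight_cutoff_Cc_sec[OF f \<eta>] by blast
qed

end

theorem theorem4p8:
  fixes G0 :: "'g::t2_space set" and r s i :: "'g \<Rightarrow> 'g" and m :: "'g \<Rightarrow> 'g \<Rightarrow> 'g"
    and S0 :: "'s::topological_space set" and rS sS iS :: "'s \<Rightarrow> 's" and mS :: "'s \<Rightarrow> 's \<Rightarrow> 's"
    and p :: "'s \<Rightarrow> 'g" and iota :: "complex \<Rightarrow> 'g \<Rightarrow> 's"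
    and \<psi> :: "'g \<Rightarrow> real" and f :: "'s \<Rightarrow> complex"
  assumes "topological_groupoid G0 r s m i"
    and "locally_compact_sp TYPE('g)"
    and "etale r"
    and "twist G0 r s m i S0 rS sS mS iS p iota"
    and "locally_proper_negative_type G0 r s m i \<psi>"
    and "\<exists>g. \<psi> g \<noteq> 0"
    and "rapid_decay G0 r s mS iS p iota (\<lambda>g. sqrt (\<psi> g))"
    and "Cr_sec G0 r s mS iS p iota f"
  shows "\<forall>\<epsilon>>0. \<exists>g. Cc_sec r mS p iota g \<and>
           closure (p ` {\<sigma>. g \<sigma> \<noteq> 0}) \<subseteq> p ` {\<sigma>. f \<sigma> \<noteq> 0} \<and>
           rnorm G0 s mS iS p (\<lambda>\<sigma>. f \<sigma> - g \<sigma>) < ereal \<epsilon>"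
proof -
  obtain c k where c: "0 < c" and rd: "\<forall>h. Cc_sec r mS p iota h \<longrightarrow>
      rnorm G0 s mS iS p h \<le> ereal c * norm_2pL G0 r s p (\<lambda>g. sqrt (\<psi> g)) k h"
    using assms(7) unfolding rapid_decay_def by blast
  have "groupoid G0 r s m i" using assms(1) unfolding topological_groupoid_def by (rule conjunct1)
  moreover have "groupoid S0 rS sS mS iS"
    using assms(4) unfolding twist_def topological_groupoid_def by (elim conjE)
  ultimately interpret rapid_decay_twist G0 r s i m S0 rS sS iS mS p iota \<psi> c k
    using assms(1,3,4,5) c rd by unfold_locales (simp_all add: groupoid_laws_def)
  show ?thesis using Cr_sec_approx_within_support[OF assms(8)] by blast
qed

end
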